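(* Let $|\phi\rangle$ be a pure $n$-qubit stabilizer state and $A\subseteq\{0,1\}^n$ its computational-basis support. Under homogeneous local amplitude damping, $|\phi\rangle$ is a magic-insulator if and only if all strings in $A$ have the same Hamming weight. If the strings in $A$ do not all have the same Hamming weight, then $|\phi\rangle$ is a magic-generator. (Hence every pure stabilizer state is exactly one of the two, and the set $\{\gamma\in[0,1]:\mathcal E_\gamma^{\otimes n}(|\phi\rangle\langle\phi|)\in\mathcal S\}$ is either $[0,1]$ or $\{0,1\}$.)
   Context: $\mathcal E_\gamma$ is single-qubit amplitude damping with Kraus operators $|0\rangle\langle0|+\sqrt{1-\gamma}|1\rangle\langle1|$ and $\sqrt\gamma|0\rangle\langle1|$; homogeneous local damping means $\mathcal E_\gamma^{\otimes n}$. A pure stabilizer state is $C|0^n\rangle$ with $C$ Clifford; $\mathcal S$ is the convex hull of their density matrices. A pure stabilizer state $|\phi\rangle$ is a magic-insulator if $\mathcal E_\gamma^{\otimes n}(|\phi\rangle\langle\phi|)\in\mathcal S$ for all $\gamma\in[0,1]$, and a magic-generator if $\mathcal E_\gamma^{\otimes n}(|\phi\rangle\langle\phi|)\notin\mathcal S$ for every $0<\gamma<1$. The computational-basis support of $|\phi\rangle$ is $\{x:\langle x|\phi\rangle\ne0\}$. *)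

theory Defs
  imports Complex_Main "Jordan_Normal_Form.Matrix"
begin

text \<open>The computational basis vector |x> is indexed by the
natural number x < 2^n, and the bit of qubit j in x is  bit x j  (j < n).\<close>

definition dagger :: "complex mat \<Rightarrow> complex mat" where
  "dagger A = mat (dim_col A) (dim_row A) (\<lambda>(i,j). cnj (A $$ (j,i)))"

definition unitary_mat :: "nat \<Rightarrow> complex mat \<Rightarrow> bool" where
  "unitary_mat d U \<longleftrightarrow> U \<in> carrier_mat d d \<and> U * dagger U = 1\<^sub>m d \<and> dagger U * U = 1\<^sub>m d"

text \<open>n-fold tensor product of 2x2 matrices Ms 0, ..., Ms (n-1) (Ms j acts on qubit j).\<close>
definition ntensor :: "nat \<Rightarrow> (nat \<Rightarrow> complex mat) \<Rightarrow> complex mat" where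
  "ntensor n Ms = mat (2^n) (2^n)
     (\<lambda>(r,c). \<Prod>j<n. Ms j $$ (of_bool (bit r j), of_bool (bit c j)))"

definition pauliI :: "complex mat" where "pauliI = mat_of_rows_list 2 [[1,0],[0,1]]"
definition pauliX :: "complex mat" where "pauliX = mat_of_rows_list 2 [[0,1],[1,0]]"
definition pauliY :: "complex mat" where "pauliY = mat_of_rows_list 2 [[0,-\<i>],[\<i>,0]]"
definition pauliZ :: "complex mat" where "pauliZ = mat_of_rows_list 2 [[1,0],[0,-1]]"

definition pauli1 :: "nat \<Rightarrow> complex mat" where
  "pauli1 k = (if k = 0 then pauliI else if k = 1 then pauliX else if k = 2 then pauliY else pauliZ)"

definition pauli_group :: "nat \<Rightarrow> complex mat set" where
  "pauli_group n = {(\<i> ^ m) \<cdot>\<^sub>m ntensor n (\<lambda>j. pauli1 (p j)) | m p. m < 4 \<and> (\<forall>j. p j < 4)}"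

definition clifford :: "nat \<Rightarrow> complex mat \<Rightarrow> bool" where
  "clifford n U \<longleftrightarrow> unitary_mat (2^n) U \<and>
     (\<forall>P \<in> pauli_group n. U * P * dagger U \<in> pauli_group n)"

definition ket0 :: "nat \<Rightarrow> complex vec" where
  "ket0 n = unit_vec (2^n) 0"

definition stabilizer_state :: "nat \<Rightarrow> complex vec \<Rightarrow> bool" where
  "stabilizer_state n \<psi> \<longleftrightarrow> (\<exists>C. clifford n C \<and> \<psi> = C *\<^sub>v ket0 n)"

definition proj :: "complex vec \<Rightarrow> complex mat" where
  "proj \<psi> = mat (dim_vec \<psi>) (dim_vec \<psi>) (\<lambda>(i,j). \<psi> $ i * cnj (\<psi> $ j))"

definition stab_polytope :: "nat \<Rightarrow> complex mat set" where
  "stab_polytope n = {\<rho>. \<exists>(m::nat) (p::nat \<Rightarrow> real) \<psi>.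
      (\<forall>i<m. p i \<ge> 0 \<and> stabilizer_state n (\<psi> i)) \<and> (\<Sum>i<m. p i) = 1 \<and>
      \<rho> = mat (2^n) (2^n) (\<lambda>(r,c). \<Sum>i<m. complex_of_real (p i) * proj (\<psi> i) $$ (r,c))}"

definition AD_K0 :: "real \<Rightarrow> complex mat" where
  "AD_K0 \<gamma> = mat_of_rows_list 2 [[1,0],[0, complex_of_real (sqrt (1-\<gamma>))]]"
definition AD_K1 :: "real \<Rightarrow> complex mat" where
  "AD_K1 \<gamma> = mat_of_rows_list 2 [[0, complex_of_real (sqrt \<gamma>)],[0,0]]"

definition AD_kraus :: "nat \<Rightarrow> real \<Rightarrow> nat \<Rightarrow> complex mat" where
  "AD_kraus n \<gamma> s = ntensor n (\<lambda>j. if bit s j then AD_K1 \<gamma> else AD_K0 \<gamma>)"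

definition AD_channel :: "nat \<Rightarrow> real \<Rightarrow> complex mat \<Rightarrow> complex mat" where
  "AD_channel n \<gamma> \<rho> = mat (2^n) (2^n)
     (\<lambda>(r,c). \<Sum>s<2^n. (AD_kraus n \<gamma> s * \<rho> * dagger (AD_kraus n \<gamma> s)) $$ (r,c))"

definition magic_insulator :: "nat \<Rightarrow> complex vec \<Rightarrow> bool" where
  "magic_insulator n \<psi> \<longleftrightarrow>
     (\<forall>\<gamma>::real. 0 \<le> \<gamma> \<and> \<gamma> \<le> 1 \<longrightarrow> AD_channel n \<gamma> (proj \<psi>) \<in> stab_polytope n)"

definition magic_generator :: "nat \<Rightarrow> complex vec \<Rightarrow> bool" where
  "magic_generator n \<psi> \<longleftrightarrow>
     (\<forall>\<gamma>::real. 0 < \<gamma> \<and> \<gamma> < 1 \<longrightarrow> AD_channel n \<gamma> (proj \<psi>) \<notin> stab_polytope n)"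

definition support :: "nat \<Rightarrow> complex vec \<Rightarrow> nat set" where
  "support n \<psi> = {x. x < 2^n \<and> \<psi> $ x \<noteq> 0}"

definition hamming_weight :: "nat \<Rightarrow> nat \<Rightarrow> nat" where
  "hamming_weight n x = card {j. j < n \<and> bit x j}"

end

(* Damping preserves the computational-basis structure: the Kraus operator K_s of the n-fold
   amplitude damping channel sends a state to a scalar multiple of X_s P_s applied to it, where P_s
   projects the qubits in s onto |1>, the scalar being sqrt(gamma)^|s| sqrt(1-gamma)^(w-|s|) when all
   support strings have weight w. Projecting a qubit of a stabilizer state gives a multiple of a
   stabilizer state (either the state is a Z_j-eigenvector, or a stabilizer g anticommuting with Z_j
   yields the Clifford (g +- Z_j)/sqrt 2), so for constant weight every Kraus branch is a stabilizer
   state and the damped state is in the polytope. Conversely, the nonzero amplitudes of a stabilizer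
   state have equal modulus, so every rho in the polytope satisfies |rho_xy| <= rho_xx. If the
   weights are not constant, take x of maximal weight and y lighter; only the no-jump branch reaches
   row x, so damping multiplies rho_xx by (1-gamma)^|x| but rho_xy only by (1-gamma)^((|x|+|y|)/2),
   violating the inequality for 0 < gamma < 1. *)

theory Submission
  imports Defs
begin

lemma not_bit_ge_if_less_pow2: "(x::nat) < 2^n \<Longrightarrow> n \<le> j \<Longrightarrow> \<not> bit x j"
  by (metis bit_take_bit_iff not_le take_bit_nat_eq_self)

lemma nat_eq_if_low_bits_eq:
  "(x::nat) < 2^n \<Longrightarrow> y < 2^n \<Longrightarrow> (\<And>j. j < n \<Longrightarrow> bit x j = bit y j) \<Longrightarrow> x = y"
  by (metis bit_eq_iff not_bit_ge_if_less_pow2 not_le)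

lemma ex_low_bit_if_nonzero: "(r::nat) < 2^n \<Longrightarrow> r \<noteq> 0 \<Longrightarrow> \<exists>j<n. bit r j"
  using nat_eq_if_low_bits_eq[of r n 0] by auto

lemma xor_less_pow2: "(x::nat) < 2^n \<Longrightarrow> y < 2^n \<Longrightarrow> xor x y < 2^n"
  by (metis take_bit_nat_eq_self_iff take_bit_xor)

lemma xor_xor_cancel: "xor (xor a b) b = (a::'a::semiring_bit_operations)"
  by (simp add: xor.assoc)

lemma ex_less_pow2_with_bits: "\<exists>k<(2::nat)^n. \<forall>j<n. bit k j = f j"
proof (intro exI conjI allI impI)
  let ?k = "horner_sum of_bool (2::nat) (map f [0..<n])"
  show "?k < 2^n" using horner_sum_bound[of "map f [0..<n]"] by simp
  show "bit ?k j = f j" if "j < n" for j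
    using that by (simp add: bit_horner_sum_bit_iff possible_bit_def)
qed

lemma sum_lessThan_double: "(\<Sum>k<2*m. g k) = (\<Sum>k<m. g (2*k) + g (2*k+1))"
  for g :: "nat \<Rightarrow> 'a::comm_monoid_add"
  by (induction m) (simp_all add: add.assoc)

lemma sum_pow2_prod_bits:
  fixes F :: "nat \<Rightarrow> bool \<Rightarrow> 'a::comm_semiring_1"
  shows "(\<Sum>k<(2::nat)^n. \<Prod>j<n. F j (bit k j)) = (\<Prod>j<n. F j False + F j True)"
proof (induction n arbitrary: F)
  case 0
  then show ?case by simp
next
  case (Suc n)
  have "(\<Sum>k<(2::nat)^Suc n. \<Prod>j<Suc n. F j (bit k j))
      = (\<Sum>k<2*(2::nat)^n. F 0 (odd k) * (\<Prod>j<n. F (Suc j) (bit (k div 2) j)))"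
    by (simp add: prod.lessThan_Suc_shift bit_Suc bit_0 del: prod.lessThan_Suc)
  also have "\<dots> = (\<Sum>k<(2::nat)^n. (F 0 False + F 0 True) * (\<Prod>j<n. F (Suc j) (bit k j)))"
    by (subst sum_lessThan_double) (simp add: algebra_simps)
  also have "\<dots> = (\<Prod>j<Suc n. F j False + F j True)"
    by (simp add: sum_distrib_left[symmetric] Suc[of "\<lambda>j. F (Suc j)"] prod.lessThan_Suc_shift
        del: prod.lessThan_Suc)
  finally show ?case .
qed

lemma hamming_weight_pos: "(s::nat) < 2^n \<Longrightarrow> s \<noteq> 0 \<Longrightarrow> 0 < hamming_weight n s"
  using ex_low_bit_if_nonzero[of s n] by (auto simp: hamming_weight_def card_gt_0_iff)

lemma hamming_weight_xor_disjoint: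
  assumes "\<And>j. j < n \<Longrightarrow> bit s j \<Longrightarrow> \<not> bit r j"
  shows "hamming_weight n (xor r s) = hamming_weight n r + hamming_weight n s"
proof -
  have "{j. j < n \<and> bit (xor r s) j} = {j. j < n \<and> bit r j} \<union> {j. j < n \<and> bit s j}"
    using assms by (auto simp: bit_xor_iff)
  moreover have "{j. j < n \<and> bit r j} \<inter> {j. j < n \<and> bit s j} = {}" using assms by auto
  ultimately show ?thesis unfolding hamming_weight_def by (simp add: card_Un_disjoint)
qed

lemma prod_lessThan_eq_single:
  "j < (n::nat) \<Longrightarrow> (\<And>l. l < n \<Longrightarrow> l \<noteq> j \<Longrightarrow> f l = 1) \<Longrightarrow> (\<Prod>l<n. f l) = (f j :: complex)"
  by (subst prod.remove[of _ j]) (auto intro!: prod.neutral)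

lemma prod_pm_one: "(\<And>j. j < (n::nat) \<Longrightarrow> f j = 1 \<or> f j = -1) \<Longrightarrow> (\<Prod>j<n. f j) = 1 \<or> (\<Prod>j<n. f j) = (-1 :: complex)"
proof (induction n)
  case (Suc n)
  have "f n = 1 \<or> f n = -1" "prod f {..<n} = 1 \<or> prod f {..<n} = -1" using Suc by auto
  thus ?case by auto
qed simp

lemma smult_smult_mat: "a \<cdot>\<^sub>m (b \<cdot>\<^sub>m A) = (a * b) \<cdot>\<^sub>m (A :: complex mat)"
  by (rule eq_matI) auto

lemma one_smult_mat [simp]: "1 \<cdot>\<^sub>m A = (A :: complex mat)"
  by (rule eq_matI) auto

lemma smult_mat_mult_vec:
  "A \<in> carrier_mat a b \<Longrightarrow> v \<in> carrier_vec b \<Longrightarrow> (k \<cdot>\<^sub>m A) *\<^sub>v v = k \<cdot>\<^sub>v (A *\<^sub>v v)"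
  by (rule eq_vecI) (auto simp: scalar_prod_def sum_distrib_left mult.assoc)

lemma smult_mult_smult_mat:
  "A \<in> carrier_mat a b \<Longrightarrow> B \<in> carrier_mat b c \<Longrightarrow> (x \<cdot>\<^sub>m A) * (y \<cdot>\<^sub>m B) = (x * y) \<cdot>\<^sub>m (A * B :: complex mat)"
  by (simp add: mult_smult_assoc_mat[of _ a b _ c] mult_smult_distrib[of _ a b _ c] smult_smult_mat
      mult.commute)

lemma square_mat_assoc:
  "A \<in> carrier_mat N N \<Longrightarrow> B \<in> carrier_mat N N \<Longrightarrow> C \<in> carrier_mat N N \<Longrightarrow> A * B * C = A * (B * C)"
  and square_mat_assoc_vec:
  "A \<in> carrier_mat N N \<Longrightarrow> B \<in> carrier_mat N N \<Longrightarrow> v \<in> carrier_vec N \<Longrightarrow> A * B *\<^sub>v v = A *\<^sub>v (B *\<^sub>v v)"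
  and square_mat_smult_left:
  "A \<in> carrier_mat N N \<Longrightarrow> B \<in> carrier_mat N N \<Longrightarrow> (k \<cdot>\<^sub>m A) * B = k \<cdot>\<^sub>m (A * B)"
  and square_mat_smult_right:
  "A \<in> carrier_mat N N \<Longrightarrow> B \<in> carrier_mat N N \<Longrightarrow> A * (k \<cdot>\<^sub>m B) = k \<cdot>\<^sub>m (A * B)"
  for A :: "complex mat"
  by (auto intro: assoc_mult_mat assoc_mult_mat_vec mult_smult_assoc_mat mult_smult_distrib)

lemmas square_mat_simps = square_mat_assoc square_mat_assoc_vec square_mat_smult_left
  square_mat_smult_right mult_carrier_mat[where nr=N and n=N and nc=N]
  mult_mat_vec_carrier[where nr=N and n=N] for N

lemma mult_cancel_left_mat:
  "A \<in> carrier_mat N N \<Longrightarrow> B \<in> carrier_mat N N \<Longrightarrow> A * B = 1\<^sub>m N \<Longrightarrow> X \<in> carrier_mat N N \<Longrightarrow>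
   A * (B * X) = X"
  for A :: "complex mat" by (metis assoc_mult_mat left_mult_one_mat)

lemma mult_cancel_left_mat_vec:
  "A \<in> carrier_mat N N \<Longrightarrow> B \<in> carrier_mat N N \<Longrightarrow> A * B = 1\<^sub>m N \<Longrightarrow> v \<in> carrier_vec N \<Longrightarrow>
   A *\<^sub>v (B *\<^sub>v v) = v"
  for A :: "complex mat" by (metis assoc_mult_mat_vec one_mult_mat_vec)

lemma dagger_carrier [simp]: "A \<in> carrier_mat a b \<Longrightarrow> dagger A \<in> carrier_mat b a"
  and dagger_dims [simp]: "dim_row (dagger A) = dim_col A" "dim_col (dagger A) = dim_row A"
  by (auto simp: dagger_def)

lemma dagger_dagger [simp]: "dagger (dagger A) = A"
  by (rule eq_matI) (auto simp: dagger_def)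

lemma dagger_mult:
  "A \<in> carrier_mat a b \<Longrightarrow> B \<in> carrier_mat b c \<Longrightarrow> dagger (A * B) = dagger B * dagger A"
  by (rule eq_matI) (auto simp: dagger_def scalar_prod_def row_def col_def intro!: sum.cong)

lemma dagger_smult: "dagger (k \<cdot>\<^sub>m A) = cnj k \<cdot>\<^sub>m dagger A"
  by (rule eq_matI) (auto simp: dagger_def)

lemma dagger_add: "A \<in> carrier_mat a b \<Longrightarrow> B \<in> carrier_mat a b \<Longrightarrow> dagger (A + B) = dagger A + dagger B"
  by (rule eq_matI) (auto simp: dagger_def)

lemma dagger_one [simp]: "dagger (1\<^sub>m n) = 1\<^sub>m n"
  by (rule eq_matI) (auto simp: dagger_def)

lemma unitary_conj_mult:
  assumes C: "C \<in> carrier_mat N N" "dagger C * C = 1\<^sub>m N" and "A \<in> carrier_mat N N" "B \<in> carrier_mat N N"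
  shows "(C * A * dagger C) * (C * B * dagger C) = C * (A * B) * dagger C"
proof -
  have "(C * A * dagger C) * (C * B * dagger C) = C * (A * (dagger C * (C * (B * dagger C))))"
    using assms by (simp add: square_mat_simps[where N=N])
  also have "dagger C * (C * (B * dagger C)) = B * dagger C"
    using assms by (intro mult_cancel_left_mat[OF _ C(1,2)]) auto
  finally show ?thesis using assms by (simp add: square_mat_simps[where N=N])
qed

lemma conj_smult_mat:
  "C \<in> carrier_mat N N \<Longrightarrow> X \<in> carrier_mat N N \<Longrightarrow> C * (k \<cdot>\<^sub>m X) * dagger C = k \<cdot>\<^sub>m (C * X * dagger C)"
  by (simp add: square_mat_simps[where N=N])

lemma unitary_conj_hermitian_involution:
  assumes C: "C \<in> carrier_mat N N" "C * dagger C = 1\<^sub>m N" "dagger C * C = 1\<^sub>m N"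
    and P: "P \<in> carrier_mat N N" "dagger P = P" "P * P = 1\<^sub>m N"
  shows "dagger (C * P * dagger C) = C * P * dagger C" "(C * P * dagger C) * (C * P * dagger C) = 1\<^sub>m N"
proof -
  show "dagger (C * P * dagger C) = C * P * dagger C"
    using C P by (simp add: dagger_mult[of _ N N _ N] square_mat_simps[where N=N])
  show "(C * P * dagger C) * (C * P * dagger C) = 1\<^sub>m N"
    using unitary_conj_mult[OF C(1,3) P(1) P(1)] C P by simp
qed

lemma unitary_conj_anticommute:
  assumes "C \<in> carrier_mat N N" "dagger C * C = 1\<^sub>m N" "A \<in> carrier_mat N N" "B \<in> carrier_mat N N"
    and "A * B = (-1) \<cdot>\<^sub>m (B * A)"
  shows "(C * A * dagger C) * (C * B * dagger C) = (-1) \<cdot>\<^sub>m ((C * B * dagger C) * (C * A * dagger C))"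
  using assms by (simp add: unitary_conj_mult conj_smult_mat)

lemma cnj_mult_self: "cnj z * z = complex_of_real ((cmod z)^2)"
  using complex_norm_square[of z] by (simp add: mult.commute)

definition mat2 :: "complex \<Rightarrow> complex \<Rightarrow> complex \<Rightarrow> complex \<Rightarrow> complex mat" where
  "mat2 a b c d = mat 2 2 (\<lambda>(i,j). if i = 0 then (if j = 0 then a else b) else (if j = 0 then c else d))"

definition bentry :: "complex mat \<Rightarrow> bool \<Rightarrow> bool \<Rightarrow> complex" where
  "bentry M a b = M $$ (of_bool a, of_bool b)"

lemma mat2_carrier [simp]: "mat2 a b c d \<in> carrier_mat 2 2"
  and mat2_dims [simp]: "dim_row (mat2 a b c d) = 2" "dim_col (mat2 a b c d) = 2"
  by (auto simp: mat2_def)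

lemma bentry_mat2 [simp]:
  "bentry (mat2 a b c d) x y = (if x then (if y then d else c) else (if y then b else a))"
  by (simp add: bentry_def mat2_def)

lemma less2_cases: "(i::nat) < 2 \<Longrightarrow> i = 0 \<or> i = 1" by auto

lemma mat2_eq_iff: "mat2 a b c d = mat2 a' b' c' d' \<longleftrightarrow> a = a' \<and> b = b' \<and> c = c' \<and> d = d'"
  by (metis bentry_mat2)

lemma mat2_mult [simp]: "mat2 a b c d * mat2 e f g h = mat2 (a*e+b*g) (a*f+b*h) (c*e+d*g) (c*f+d*h)"
  by (rule eq_matI)
    (auto simp: mat2_def scalar_prod_def row_def col_def numeral_2_eq_2 dest!: less2_cases)

lemma mat2_smult [simp]: "k \<cdot>\<^sub>m mat2 a b c d = mat2 (k*a) (k*b) (k*c) (k*d)"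
  by (rule eq_matI) (auto simp: mat2_def dest!: less2_cases)

lemma mat2_one: "1\<^sub>m 2 = mat2 1 0 0 1"
  by (rule eq_matI) (auto simp: mat2_def dest!: less2_cases)

lemma dagger_mat2 [simp]: "dagger (mat2 a b c d) = mat2 (cnj a) (cnj c) (cnj b) (cnj d)"
  by (rule eq_matI) (auto simp: mat2_def dagger_def dest!: less2_cases)

lemma mat2_of_rows_list: "mat_of_rows_list 2 [[a, b], [c, d]] = mat2 a b c d"
  by (rule eq_matI) (auto simp: mat2_def mat_of_rows_list_def dest!: less2_cases)

lemma bentry_mult:
  "A \<in> carrier_mat 2 2 \<Longrightarrow> B \<in> carrier_mat 2 2 \<Longrightarrow>
   bentry (A * B) a c = bentry A a False * bentry B False c + bentry A a True * bentry B True c"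
  by (cases a; cases c) (auto simp: bentry_def scalar_prod_def row_def col_def numeral_2_eq_2)

lemma ntensor_carrier [simp]: "ntensor n Ms \<in> carrier_mat (2^n) (2^n)"
  and ntensor_dims [simp]: "dim_row (ntensor n Ms) = 2^n" "dim_col (ntensor n Ms) = 2^n"
  by (auto simp: ntensor_def)

lemma ntensor_index:
  "r < 2^n \<Longrightarrow> c < 2^n \<Longrightarrow> ntensor n Ms $$ (r,c) = (\<Prod>j<n. bentry (Ms j) (bit r j) (bit c j))"
  by (simp add: ntensor_def bentry_def)

lemma ntensor_cong: "(\<And>j. j < n \<Longrightarrow> Ms j = Ns j) \<Longrightarrow> ntensor n Ms = ntensor n Ns"
  unfolding ntensor_def by (intro cong_mat refl prod.cong) auto

lemma ntensor_mult:
  assumes "\<And>j. j < n \<Longrightarrow> Ms j \<in> carrier_mat 2 2" "\<And>j. j < n \<Longrightarrow> Ns j \<in> carrier_mat 2 2"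
  shows "ntensor n Ms * ntensor n Ns = ntensor n (\<lambda>j. Ms j * Ns j)"
proof (rule eq_matI)
  fix r c assume "r < dim_row (ntensor n (\<lambda>j. Ms j * Ns j))" "c < dim_col (ntensor n (\<lambda>j. Ms j * Ns j))"
  hence r: "r < 2^n" and c: "c < 2^n" by auto
  have "(ntensor n Ms * ntensor n Ns) $$ (r,c)
      = (\<Sum>k<(2::nat)^n. \<Prod>j<n. bentry (Ms j) (bit r j) (bit k j) * bentry (Ns j) (bit k j) (bit c j))"
    using r c by (simp add: scalar_prod_def atLeast0LessThan ntensor_index prod.distrib)
  also have "\<dots> = (\<Prod>j<n. bentry (Ms j * Ns j) (bit r j) (bit c j))"
    by (subst sum_pow2_prod_bits) (use assms in \<open>simp add: bentry_mult\<close>)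
  finally show "(ntensor n Ms * ntensor n Ns) $$ (r,c) = ntensor n (\<lambda>j. Ms j * Ns j) $$ (r,c)"
    using r c by (simp add: ntensor_index)
qed auto

lemma ntensor_smult:
  assumes "\<And>j. j < n \<Longrightarrow> Ms j \<in> carrier_mat 2 2"
  shows "ntensor n (\<lambda>j. c j \<cdot>\<^sub>m Ms j) = (\<Prod>j<n. c j) \<cdot>\<^sub>m ntensor n Ms"
proof (rule eq_matI)
  fix r s assume "r < dim_row ((\<Prod>j<n. c j) \<cdot>\<^sub>m ntensor n Ms)" "s < dim_col ((\<Prod>j<n. c j) \<cdot>\<^sub>m ntensor n Ms)"
  hence r: "r < 2^n" and s: "s < 2^n" by auto
  have "bentry (c j \<cdot>\<^sub>m Ms j) (bit r j) (bit s j) = c j * bentry (Ms j) (bit r j) (bit s j)" if "j < n" for j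
    using assms[OF that] by (auto simp: bentry_def)
  thus "ntensor n (\<lambda>j. c j \<cdot>\<^sub>m Ms j) $$ (r,s) = ((\<Prod>j<n. c j) \<cdot>\<^sub>m ntensor n Ms) $$ (r,s)"
    using r s by (simp add: ntensor_index prod.distrib)
qed auto

lemma ntensor_one: "ntensor n (\<lambda>j. 1\<^sub>m 2) = 1\<^sub>m (2^n)"
proof (rule eq_matI)
  fix r c assume "r < dim_row (1\<^sub>m (2^n))" "c < dim_col (1\<^sub>m (2^n)::complex mat)"
  hence r: "r < 2^n" and c: "c < 2^n" by auto
  have "(\<Prod>j<n. bentry (1\<^sub>m 2) (bit r j) (bit c j)) = (if r = c then 1 else 0)"
  proof (cases "r = c")
    case False
    then obtain j where "j < n" "bit r j \<noteq> bit c j" using nat_eq_if_low_bits_eq[OF r c] by blast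
    thus ?thesis using False by (auto simp: mat2_one intro!: prod_zero bexI[of _ j])
  qed (auto simp: mat2_one intro!: prod.neutral)
  thus "ntensor n (\<lambda>j. 1\<^sub>m 2) $$ (r,c) = 1\<^sub>m (2^n) $$ (r,c)" using r c by (simp add: ntensor_index)
qed auto

lemma dagger_ntensor:
  assumes "\<And>j. j < n \<Longrightarrow> Ms j \<in> carrier_mat 2 2"
  shows "dagger (ntensor n Ms) = ntensor n (\<lambda>j. dagger (Ms j))"
proof (rule eq_matI)
  fix r c assume "r < dim_row (ntensor n (\<lambda>j. dagger (Ms j)))" "c < dim_col (ntensor n (\<lambda>j. dagger (Ms j)))"
  hence r: "r < 2^n" and c: "c < 2^n" by auto
  have "bentry (dagger (Ms j)) (bit r j) (bit c j) = cnj (bentry (Ms j) (bit c j) (bit r j))" if "j < n" for j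
    using assms[OF that] by (auto simp: bentry_def dagger_def)
  thus "dagger (ntensor n Ms) $$ (r,c) = ntensor n (\<lambda>j. dagger (Ms j)) $$ (r,c)"
    using r c by (simp add: ntensor_index dagger_def)
qed (auto simp: dagger_def)

lemma ntensor_mult_vec_flip:
  assumes "\<And>j. j < n \<Longrightarrow> Ms j \<in> carrier_mat 2 2"
    and "\<And>j a b. j < n \<Longrightarrow> b \<noteq> (a \<noteq> bit m j) \<Longrightarrow> bentry (Ms j) a b = 0"
    and m: "m < 2^n" and v: "v \<in> carrier_vec (2^n)" and r: "r < 2^n"
  shows "(ntensor n Ms *\<^sub>v v) $ r = (\<Prod>j<n. bentry (Ms j) (bit r j) (bit r j \<noteq> bit m j)) * v $ (xor r m)"
proof -
  have off_shift: "ntensor n Ms $$ (r,k) = 0" if k: "k < 2^n" "k \<noteq> xor r m" for k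
  proof -
    obtain j where j: "j < n" "bit k j \<noteq> bit (xor r m) j"
      using nat_eq_if_low_bits_eq[OF k(1) xor_less_pow2[OF r m]] k(2) by auto
    hence "bentry (Ms j) (bit r j) (bit k j) = 0" using assms(2) by (simp add: bit_xor_iff)
    thus ?thesis using j(1) r k(1) by (auto simp: ntensor_index intro!: prod_zero)
  qed
  have "(ntensor n Ms *\<^sub>v v) $ r = (\<Sum>k<2^n. ntensor n Ms $$ (r,k) * v $ k)"
    using r v by (simp add: scalar_prod_def atLeast0LessThan)
  also have "\<dots> = (\<Sum>k<2^n. if k = xor r m then ntensor n Ms $$ (r,k) * v $ k else 0)"
    using off_shift by (intro sum.cong refl) auto
  also have "\<dots> = ntensor n Ms $$ (r, xor r m) * v $ (xor r m)"
    using xor_less_pow2[OF r m] by simp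
  finally show ?thesis using r xor_less_pow2[OF r m] by (simp add: ntensor_index bit_xor_iff)
qed

lemma ntensor_mult_vec_diag:
  assumes "\<And>j. j < n \<Longrightarrow> Ms j \<in> carrier_mat 2 2"
    and "\<And>j a b. j < n \<Longrightarrow> b \<noteq> a \<Longrightarrow> bentry (Ms j) a b = 0"
    and "v \<in> carrier_vec (2^n)" and "r < 2^n"
  shows "(ntensor n Ms *\<^sub>v v) $ r = (\<Prod>j<n. bentry (Ms j) (bit r j) (bit r j)) * v $ r"
  using ntensor_mult_vec_flip[OF assms(1) _ _ assms(3,4), where m=0] assms(2) by simp

lemma pauli_mat2:
  "pauliI = mat2 1 0 0 1" "pauliX = mat2 0 1 1 0" "pauliY = mat2 0 (-\<i>) \<i> 0" "pauliZ = mat2 1 0 0 (-1)"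
  by (simp_all add: pauliI_def pauliX_def pauliY_def pauliZ_def mat2_of_rows_list)

lemmas pauli1_mat2 = pauli1_def pauli_mat2

lemma pauli1_carrier [simp]: "pauli1 a \<in> carrier_mat 2 2"
  by (simp add: pauli1_mat2)

lemma less4_cases: "(a::nat) < 4 \<Longrightarrow> a = 0 \<or> a = 1 \<or> a = 2 \<or> a = 3" by auto

definition pauli_prod_index :: "nat \<Rightarrow> nat \<Rightarrow> nat" where
  "pauli_prod_index a b = (if a = 0 then b else if b = 0 then a else if a = b then 0 else 6 - a - b)"

definition pauli_prod_phase :: "nat \<Rightarrow> nat \<Rightarrow> nat" where
  "pauli_prod_phase a b =
     (if (a=1 \<and> b=2) \<or> (a=2 \<and> b=3) \<or> (a=3 \<and> b=1) then 1
      else if (a=2 \<and> b=1) \<or> (a=3 \<and> b=2) \<or> (a=1 \<and> b=3) then 3 else 0)"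

definition pauli_comm_sign :: "nat \<Rightarrow> nat \<Rightarrow> complex" where
  "pauli_comm_sign a b = (if a = 0 \<or> b = 0 \<or> a = b then 1 else -1)"

definition pauli_flips :: "nat \<Rightarrow> bool" where
  "pauli_flips a \<longleftrightarrow> a = 1 \<or> a = 2"

lemma pauli1_mult:
  assumes "a < 4" "b < 4"
  shows "pauli1 a * pauli1 b = (\<i> ^ pauli_prod_phase a b) \<cdot>\<^sub>m pauli1 (pauli_prod_index a b)"
  using less4_cases[OF assms(1)] less4_cases[OF assms(2)]
  by (elim disjE) (simp_all add: pauli1_mat2 pauli_prod_index_def pauli_prod_phase_def
      mat2_eq_iff power3_eq_cube)

lemma pauli1_commute:
  assumes "a < 4" "b < 4"
  shows "pauli1 a * pauli1 b = pauli_comm_sign a b \<cdot>\<^sub>m (pauli1 b * pauli1 a)"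
  using less4_cases[OF assms(1)] less4_cases[OF assms(2)]
  by (elim disjE) (simp_all add: pauli1_mat2 pauli_comm_sign_def mat2_eq_iff)

lemma dagger_pauli1: "a < 4 \<Longrightarrow> dagger (pauli1 a) = pauli1 a"
  by (drule less4_cases) (auto simp: pauli1_mat2 mat2_eq_iff)

lemma pauli1_square: "a < 4 \<Longrightarrow> pauli1 a * pauli1 a = 1\<^sub>m 2"
  by (drule less4_cases) (auto simp: pauli1_mat2 mat2_eq_iff mat2_one)

lemma bentry_pauli1_eq_0: "a < 4 \<Longrightarrow> y \<noteq> (x \<noteq> pauli_flips a) \<Longrightarrow> bentry (pauli1 a) x y = 0"
  by (drule less4_cases) (auto simp: pauli1_mat2 pauli_flips_def)

lemma norm_bentry_pauli1: "a < 4 \<Longrightarrow> cmod (bentry (pauli1 a) x (x \<noteq> pauli_flips a)) = 1"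
  by (drule less4_cases) (auto simp: pauli1_mat2 pauli_flips_def)

definition pauli_op :: "nat \<Rightarrow> (nat \<Rightarrow> nat) \<Rightarrow> complex mat" where
  "pauli_op n p = ntensor n (\<lambda>j. pauli1 (p j))"

definition pauli_Z :: "nat \<Rightarrow> nat \<Rightarrow> complex mat" where
  "pauli_Z n j = pauli_op n (\<lambda>l. if l = j then 3 else 0)"

lemma pauli_op_carrier [simp]: "pauli_op n p \<in> carrier_mat (2^n) (2^n)"
  and pauli_op_dims [simp]: "dim_row (pauli_op n p) = 2^n" "dim_col (pauli_op n p) = 2^n"
  by (simp_all add: pauli_op_def)

lemma pauli_Z_carrier [simp]: "pauli_Z n j \<in> carrier_mat (2^n) (2^n)"
  and pauli_Z_dims [simp]: "dim_row (pauli_Z n j) = 2^n" "dim_col (pauli_Z n j) = 2^n"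
  by (simp_all add: pauli_Z_def)

lemma pauli_op_mult:
  assumes "\<And>j. j < n \<Longrightarrow> p j < 4" "\<And>j. j < n \<Longrightarrow> q j < 4"
  shows "pauli_op n p * pauli_op n q =
    (\<Prod>j<n. \<i> ^ pauli_prod_phase (p j) (q j)) \<cdot>\<^sub>m pauli_op n (\<lambda>j. pauli_prod_index (p j) (q j))"
proof -
  have "pauli_op n p * pauli_op n q = ntensor n (\<lambda>j. pauli1 (p j) * pauli1 (q j))"
    unfolding pauli_op_def by (rule ntensor_mult) auto
  also have "\<dots> = ntensor n (\<lambda>j. (\<i> ^ pauli_prod_phase (p j) (q j)) \<cdot>\<^sub>m pauli1 (pauli_prod_index (p j) (q j)))"
    using assms by (intro ntensor_cong) (simp add: pauli1_mult)
  finally show ?thesis unfolding pauli_op_def by (subst (asm) ntensor_smult) auto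
qed

lemma pauli_op_commute:
  assumes "\<And>j. j < n \<Longrightarrow> p j < 4" "\<And>j. j < n \<Longrightarrow> q j < 4"
  shows "pauli_op n p * pauli_op n q = (\<Prod>j<n. pauli_comm_sign (p j) (q j)) \<cdot>\<^sub>m (pauli_op n q * pauli_op n p)"
proof -
  have "pauli_op n p * pauli_op n q = ntensor n (\<lambda>j. pauli_comm_sign (p j) (q j) \<cdot>\<^sub>m (pauli1 (q j) * pauli1 (p j)))"
    unfolding pauli_op_def using assms by (subst ntensor_mult) (auto intro!: ntensor_cong pauli1_commute)
  also have "\<dots> = (\<Prod>j<n. pauli_comm_sign (p j) (q j)) \<cdot>\<^sub>m (pauli_op n q * pauli_op n p)"
    unfolding pauli_op_def
    by (subst ntensor_smult) (auto simp: ntensor_mult intro: mult_carrier_mat[OF pauli1_carrier pauli1_carrier])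
  finally show ?thesis .
qed

lemma dagger_pauli_op: "(\<And>j. j < n \<Longrightarrow> p j < 4) \<Longrightarrow> dagger (pauli_op n p) = pauli_op n p"
  unfolding pauli_op_def by (subst dagger_ntensor) (auto intro!: ntensor_cong simp: dagger_pauli1)

lemma pauli_op_square: "(\<And>j. j < n \<Longrightarrow> p j < 4) \<Longrightarrow> pauli_op n p * pauli_op n p = 1\<^sub>m (2^n)"
  unfolding pauli_op_def by (subst ntensor_mult) (auto simp: pauli1_square ntensor_one cong: ntensor_cong)

lemma pauli_Z_square: "pauli_Z n j * pauli_Z n j = 1\<^sub>m (2^n)"
  unfolding pauli_Z_def by (rule pauli_op_square) simp

lemma dagger_pauli_Z: "dagger (pauli_Z n j) = pauli_Z n j"
  unfolding pauli_Z_def by (rule dagger_pauli_op) simp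

lemma i_power_mod4: "\<i> ^ k = \<i> ^ (k mod 4)"
proof -
  have "\<i> ^ k = (\<i> ^ 4) ^ (k div 4) * \<i> ^ (k mod 4)"
    by (metis mult_div_mod_eq power_add power_mult)
  thus ?thesis by simp
qed

lemma pauli_groupE:
  assumes "P \<in> pauli_group n"
  obtains m p where "\<forall>j. p j < 4" "P = \<i>^m \<cdot>\<^sub>m pauli_op n p"
  using assms by (auto simp: pauli_group_def pauli_op_def)

lemma phase_pauli_op_in_pauli_group: "(\<And>j. p j < 4) \<Longrightarrow> \<i>^k \<cdot>\<^sub>m pauli_op n p \<in> pauli_group n"
  unfolding pauli_group_def pauli_op_def
  by (subst i_power_mod4) (rule CollectI, rule exI[of _ "k mod 4"], rule exI[of _ p], auto)

lemma pauli_op_in_pauli_group: "(\<And>j. p j < 4) \<Longrightarrow> pauli_op n p \<in> pauli_group n"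
  using phase_pauli_op_in_pauli_group[of p 0 n] by simp

lemma pauli_Z_in_pauli_group: "pauli_Z n j \<in> pauli_group n"
  unfolding pauli_Z_def by (rule pauli_op_in_pauli_group) simp

lemma pauli_group_carrier: "P \<in> pauli_group n \<Longrightarrow> P \<in> carrier_mat (2^n) (2^n)"
  by (auto elim: pauli_groupE)

lemma pauli_group_phase: "P \<in> pauli_group n \<Longrightarrow> (\<i>^k) \<cdot>\<^sub>m P \<in> pauli_group n"
  by (elim pauli_groupE) (simp add: smult_smult_mat phase_pauli_op_in_pauli_group flip: power_add)

lemma pauli_group_uminus: "P \<in> pauli_group n \<Longrightarrow> (-1) \<cdot>\<^sub>m P \<in> pauli_group n"
  using pauli_group_phase[of P n 2] by simp

lemma pauli_group_sign_smult: "s = 1 \<or> s = -1 \<Longrightarrow> P \<in> pauli_group n \<Longrightarrow> s \<cdot>\<^sub>m P \<in> pauli_group n"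
  by (elim disjE) (simp_all add: pauli_group_uminus)

lemma pauli_group_mult:
  assumes "P \<in> pauli_group n" "Q \<in> pauli_group n"
  shows "P * Q \<in> pauli_group n"
proof -
  obtain m p where p: "\<forall>j. p j < 4" "P = \<i>^m \<cdot>\<^sub>m pauli_op n p" using assms(1) by (rule pauli_groupE)
  obtain m' q where q: "\<forall>j. q j < 4" "Q = \<i>^m' \<cdot>\<^sub>m pauli_op n q" using assms(2) by (rule pauli_groupE)
  have "P * Q = (\<i>^m * \<i>^m' * (\<Prod>j<n. \<i> ^ pauli_prod_phase (p j) (q j)))
      \<cdot>\<^sub>m pauli_op n (\<lambda>j. pauli_prod_index (p j) (q j))"
    using p q by (simp add: smult_mult_smult_mat[OF pauli_op_carrier pauli_op_carrier]
        pauli_op_mult smult_smult_mat)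
  also have "\<dots> = \<i>^(m + m' + (\<Sum>j<n. pauli_prod_phase (p j) (q j)))
      \<cdot>\<^sub>m pauli_op n (\<lambda>j. pauli_prod_index (p j) (q j))"
    by (simp add: power_add power_sum)
  also have "\<dots> \<in> pauli_group n"
    using p q by (intro phase_pauli_op_in_pauli_group) (auto simp: pauli_prod_index_def)
  finally show ?thesis .
qed

lemma pauli_group_commute_or_anticommute:
  assumes "P \<in> pauli_group n" "Q \<in> pauli_group n"
  obtains s where "s = 1 \<or> s = -1" "P * Q = s \<cdot>\<^sub>m (Q * P)"
proof -
  obtain m p where p: "\<forall>j. p j < 4" "P = \<i>^m \<cdot>\<^sub>m pauli_op n p" using assms(1) by (rule pauli_groupE)
  obtain m' q where q: "\<forall>j. q j < 4" "Q = \<i>^m' \<cdot>\<^sub>m pauli_op n q" using assms(2) by (rule pauli_groupE)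
  let ?s = "\<Prod>j<n. pauli_comm_sign (p j) (q j)"
  have QP: "Q * P = (\<i>^m * \<i>^m') \<cdot>\<^sub>m (pauli_op n q * pauli_op n p)"
    using p q by (simp add: smult_mult_smult_mat[OF pauli_op_carrier pauli_op_carrier] mult.commute)
  have comm: "pauli_op n p * pauli_op n q = ?s \<cdot>\<^sub>m (pauli_op n q * pauli_op n p)"
    using p q by (intro pauli_op_commute) auto
  have "P * Q = (\<i>^m * \<i>^m') \<cdot>\<^sub>m (pauli_op n p * pauli_op n q)"
    using p q by (simp add: smult_mult_smult_mat[OF pauli_op_carrier pauli_op_carrier])
  hence "P * Q = ?s \<cdot>\<^sub>m (Q * P)"
    unfolding comm QP smult_smult_mat by (simp only: mult.commute)
  moreover have "?s = 1 \<or> ?s = -1"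
    by (rule prod_pm_one) (simp add: pauli_comm_sign_def)
  ultimately show ?thesis using that by blast
qed

lemma finite_pauli_group: "finite (pauli_group n)"
proof -
  let ?S = "{..<(4::nat)} \<times> (PiE {..<n} (\<lambda>_. {..<(4::nat)}))"
  have "pauli_group n \<subseteq> (\<lambda>(m,p). \<i>^m \<cdot>\<^sub>m pauli_op n p) ` ?S"
  proof
    fix P assume "P \<in> pauli_group n"
    then obtain m p where p: "m < 4" "\<forall>j. p j < 4" "P = \<i>^m \<cdot>\<^sub>m pauli_op n p"
      by (auto simp: pauli_group_def pauli_op_def)
    have "pauli_op n p = pauli_op n (restrict p {..<n})"
      unfolding pauli_op_def by (rule ntensor_cong) auto
    thus "P \<in> (\<lambda>(m,p). \<i>^m \<cdot>\<^sub>m pauli_op n p) ` ?S"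
      using p by (intro image_eqI[of _ _ "(m, restrict p {..<n})"]) auto
  qed
  moreover have "finite ?S" by (intro finite_cartesian_product finite_PiE) auto
  ultimately show ?thesis using finite_subset by blast
qed

lemma cliffordD:
  assumes "clifford n C"
  shows "C \<in> carrier_mat (2^n) (2^n)" "C * dagger C = 1\<^sub>m (2^n)" "dagger C * C = 1\<^sub>m (2^n)"
    "\<And>P. P \<in> pauli_group n \<Longrightarrow> C * P * dagger C \<in> pauli_group n"
  using assms by (auto simp: clifford_def unitary_mat_def)

lemma clifford_one: "clifford n (1\<^sub>m (2^n))"
proof -
  have "1\<^sub>m (2^n) * P * 1\<^sub>m (2^n) = P" if "P \<in> pauli_group n" for P
    using pauli_group_carrier[OF that] by simp
  thus ?thesis by (auto simp: clifford_def unitary_mat_def)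
qed

lemma clifford_mult:
  assumes A: "clifford n A" and B: "clifford n B"
  shows "clifford n (A * B)"
proof -
  note a = cliffordD[OF A] and b = cliffordD[OF B]
  have dAB: "dagger (A * B) = dagger B * dagger A" using a(1) b(1) by (rule dagger_mult)
  have "A * B * dagger (A * B) = A * (B * dagger B) * dagger A"
    using a(1) b(1) by (simp add: dAB square_mat_simps[where N="2^n"])
  moreover have "dagger (A * B) * (A * B) = dagger B * (dagger A * A) * B"
    using a(1) b(1) by (simp add: dAB square_mat_simps[where N="2^n"])
  moreover have "A * B * P * dagger (A * B) \<in> pauli_group n" if P: "P \<in> pauli_group n" for P
  proof -
    have "A * B * P * dagger (A * B) = A * (B * P * dagger B) * dagger A"
      using a(1) b(1) pauli_group_carrier[OF P] by (simp add: dAB square_mat_simps[where N="2^n"])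
    thus ?thesis using a(4) b(4) P by simp
  qed
  ultimately show ?thesis using a b by (simp add: clifford_def unitary_mat_def)
qed

lemma clifford_pauli_op:
  assumes p: "\<And>j. p j < 4"
  shows "clifford n (pauli_op n p)"
proof -
  let ?S = "pauli_op n p"
  have S: "?S \<in> pauli_group n" "dagger ?S = ?S" "?S * ?S = 1\<^sub>m (2^n)"
    using p by (auto intro: pauli_op_in_pauli_group dagger_pauli_op pauli_op_square)
  have "?S * P * dagger ?S \<in> pauli_group n" if P: "P \<in> pauli_group n" for P
  proof -
    have Pc: "P \<in> carrier_mat (2^n) (2^n)" using P by (rule pauli_group_carrier)
    obtain s where s: "s = 1 \<or> s = -1" "?S * P = s \<cdot>\<^sub>m (P * ?S)"
      using S(1) P by (rule pauli_group_commute_or_anticommute)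
    have "?S * P * dagger ?S = s \<cdot>\<^sub>m (P * (?S * ?S))"
      unfolding S(2) s(2) using Pc by (simp add: square_mat_simps[where N="2^n"])
    thus ?thesis using pauli_group_sign_smult[OF s(1) P] S(3) Pc by simp
  qed
  thus ?thesis using S by (simp add: clifford_def unitary_mat_def)
qed

text \<open>Conjugation by a Clifford is an injective self-map of the finite Pauli group, hence onto.\<close>

lemma clifford_conj_surj:
  assumes C: "clifford n C" and Q: "Q \<in> pauli_group n"
  obtains Q' where "Q' \<in> pauli_group n" "C * Q' * dagger C = Q"
proof -
  note c = cliffordD[OF C]
  let ?f = "\<lambda>P. C * P * dagger C"
  have inv: "dagger C * ?f X * C = X" if "X \<in> carrier_mat (2^n) (2^n)" for X
  proof -
    have "dagger C * ?f X * C = (dagger C * C) * X * (dagger C * C)"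
      using c(1) that by (simp add: square_mat_simps[where N="2^n"])
    thus ?thesis using c(3) that by simp
  qed
  have "inj_on ?f (pauli_group n)"
    by (rule inj_on_inverseI[of _ "\<lambda>X. dagger C * X * C"]) (simp add: inv pauli_group_carrier)
  moreover have "?f ` pauli_group n \<subseteq> pauli_group n" using c(4) by blast
  ultimately have "?f ` pauli_group n = pauli_group n" by (intro endo_inj_surj finite_pauli_group)
  hence "Q \<in> ?f ` pauli_group n" using Q by simp
  thus ?thesis using that by (elim imageE) simp
qed

lemma ket0_carrier [simp]: "ket0 n \<in> carrier_vec (2^n)"
  and ket0_dim [simp]: "dim_vec (ket0 n) = 2^n"
  by (simp_all add: ket0_def)

lemma ket0_index: "r < 2^n \<Longrightarrow> ket0 n $ r = (if r = 0 then 1 else 0)"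
  by (simp add: ket0_def)

lemma stabilizer_state_carrier: "stabilizer_state n \<phi> \<Longrightarrow> \<phi> \<in> carrier_vec (2^n)"
  by (auto simp: stabilizer_state_def dest!: cliffordD(1))

lemma stabilizer_state_clifford:
  assumes "clifford n U" "stabilizer_state n \<phi>"
  shows "stabilizer_state n (U *\<^sub>v \<phi>)"
proof -
  obtain C where C: "clifford n C" "\<phi> = C *\<^sub>v ket0 n" using assms(2) by (auto simp: stabilizer_state_def)
  have "U *\<^sub>v \<phi> = (U * C) *\<^sub>v ket0 n"
    using C cliffordD(1)[OF C(1)] cliffordD(1)[OF assms(1)] by (simp add: square_mat_simps[where N="2^n"])
  thus ?thesis using clifford_mult[OF assms(1) C(1)] by (auto simp: stabilizer_state_def)
qed

lemma stabilizer_state_ket0: "stabilizer_state n (ket0 n)"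
  unfolding stabilizer_state_def using clifford_one[of n] by (intro exI[of _ "1\<^sub>m (2^n)"]) auto

definition sq_norm_vec :: "nat \<Rightarrow> complex vec \<Rightarrow> real" where
  "sq_norm_vec n v = (\<Sum>r<2^n. (cmod (v $ r))^2)"

lemma sq_norm_vec_smult: "v \<in> carrier_vec (2^n) \<Longrightarrow> sq_norm_vec n (a \<cdot>\<^sub>v v) = (cmod a)^2 * sq_norm_vec n v"
  by (simp add: sq_norm_vec_def norm_mult power_mult_distrib sum_distrib_left)

lemma sq_norm_stabilizer_state:
  assumes "stabilizer_state n \<phi>"
  shows "sq_norm_vec n \<phi> = 1"
proof -
  obtain C where C: "clifford n C" "\<phi> = C *\<^sub>v ket0 n" using assms by (auto simp: stabilizer_state_def)
  note c = cliffordD[OF C(1)]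
  have "complex_of_real (sq_norm_vec n \<phi>) = (\<Sum>r<2^n. cnj (C $$ (r,0)) * C $$ (r,0))"
    unfolding sq_norm_vec_def C(2) using c(1)
    by (simp add: ket0_def cnj_mult_self)
  also have "\<dots> = (dagger C * C) $$ (0,0)"
    using c(1) by (simp add: scalar_prod_def dagger_def atLeast0LessThan)
  also have "\<dots> = 1" using c(3) by simp
  finally show ?thesis by (simp add: of_real_eq_1_iff)
qed

lemma stabilizer_state_nonzero:
  assumes "stabilizer_state n \<phi>"
  obtains r where "r < 2^n" "\<phi> $ r \<noteq> 0"
proof (rule ccontr)
  assume "\<not> thesis"
  hence "sq_norm_vec n \<phi> = 0" using that by (force simp: sq_norm_vec_def intro!: sum.neutral)
  thus False using sq_norm_stabilizer_state[OF assms] by simp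
qed

section \<open>Projecting one qubit of a stabilizer state\<close>

lemma pauli_Z_mult_vec:
  assumes v: "v \<in> carrier_vec (2^n)" and j: "j < n" and r: "r < 2^n"
  shows "(pauli_Z n j *\<^sub>v v) $ r = (if bit r j then -1 else 1) * v $ r"
proof -
  have "(pauli_Z n j *\<^sub>v v) $ r = (\<Prod>l<n. bentry (pauli1 (if l = j then 3 else 0)) (bit r l) (bit r l)) * v $ r"
    unfolding pauli_Z_def pauli_op_def by (rule ntensor_mult_vec_diag[OF _ _ v r]) (auto simp: pauli1_mat2)
  also have "(\<Prod>l<n. bentry (pauli1 (if l = j then 3 else 0)) (bit r l) (bit r l)) = bentry (pauli1 3) (bit r j) (bit r j)"
    by (rule trans[OF prod_lessThan_eq_single[OF j]]) (auto simp: pauli1_mat2)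
  finally show ?thesis by (simp add: pauli1_mat2)
qed

lemma pauli_op_ket0:
  assumes "\<And>l. l < n \<Longrightarrow> p l = 0 \<or> p l = 3"
  shows "pauli_op n p *\<^sub>v ket0 n = ket0 n"
proof (rule eq_vecI)
  fix r assume "r < dim_vec (ket0 n)"
  hence r: "r < 2^n" by simp
  have "(pauli_op n p *\<^sub>v ket0 n) $ r = (\<Prod>l<n. bentry (pauli1 (p l)) (bit r l) (bit r l)) * ket0 n $ r"
    unfolding pauli_op_def
  proof (rule ntensor_mult_vec_diag[OF _ _ _ r])
    show "bentry (pauli1 (p l)) a b = 0" if "l < n" "b \<noteq> a" for l a b
      using assms[OF that(1)] that(2) by (auto simp: pauli1_mat2)
  qed auto
  also have "\<dots> = ket0 n $ r"
    using assms by (fastforce simp: ket0_index r pauli1_mat2 intro!: prod.neutral)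
  finally show "(pauli_op n p *\<^sub>v ket0 n) $ r = ket0 n $ r" .
qed simp

lemma pauli_Z_ket0: "pauli_Z n k *\<^sub>v ket0 n = ket0 n"
  unfolding pauli_Z_def by (rule pauli_op_ket0) simp

lemma pauli_Z_pauli_op_commute:
  assumes k: "k < n" and p: "\<And>l. p l < 4"
  shows "pauli_Z n k * pauli_op n p = (if pauli_flips (p k) then -1 else 1) \<cdot>\<^sub>m (pauli_op n p * pauli_Z n k)"
proof -
  have "(\<Prod>l<n. pauli_comm_sign (if l = k then 3 else 0) (p l)) = pauli_comm_sign 3 (p k)"
    by (rule trans[OF prod_lessThan_eq_single[OF k]]) (auto simp: pauli_comm_sign_def)
  also have "\<dots> = (if pauli_flips (p k) then -1 else 1)"
    using less4_cases[OF p[of k]] by (auto simp: pauli_comm_sign_def pauli_flips_def)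
  finally show ?thesis
    unfolding pauli_Z_def using p by (subst pauli_op_commute) auto
qed

definition qubit_proj :: "bool \<Rightarrow> complex mat" where
  "qubit_proj b = (if b then mat2 0 0 0 1 else mat2 1 0 0 0)"

definition proj_qubit :: "nat \<Rightarrow> nat \<Rightarrow> bool \<Rightarrow> complex mat" where
  "proj_qubit n j b = ntensor n (\<lambda>l. if l = j then qubit_proj b else 1\<^sub>m 2)"

lemma proj_qubit_carrier [simp]: "proj_qubit n j b \<in> carrier_mat (2^n) (2^n)"
  and proj_qubit_dims [simp]: "dim_row (proj_qubit n j b) = 2^n" "dim_col (proj_qubit n j b) = 2^n"
  by (simp_all add: proj_qubit_def)

lemma proj_qubit_mult_vec:
  assumes v: "v \<in> carrier_vec (2^n)" and j: "j < n" and r: "r < 2^n"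
  shows "(proj_qubit n j b *\<^sub>v v) $ r = (if bit r j = b then v $ r else 0)"
proof -
  have "(proj_qubit n j b *\<^sub>v v) $ r
      = (\<Prod>l<n. bentry (if l = j then qubit_proj b else 1\<^sub>m 2) (bit r l) (bit r l)) * v $ r"
    unfolding proj_qubit_def
    by (rule ntensor_mult_vec_diag[OF _ _ v r]) (auto simp: qubit_proj_def mat2_one)
  also have "(\<Prod>l<n. bentry (if l = j then qubit_proj b else 1\<^sub>m 2) (bit r l) (bit r l))
      = bentry (qubit_proj b) (bit r j) (bit r j)"
    by (rule trans[OF prod_lessThan_eq_single[OF j]]) (auto simp: mat2_one)
  finally show ?thesis by (auto simp: qubit_proj_def)
qed

text \<open>Writing the state as C|0>, pull Z_j back to the Pauli operator Q with C Q C^dagger = Z_j.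
  If Q is diagonal it fixes |0> up to a phase, so the state is a Z_j-eigenvector. Otherwise Q flips
  some qubit k, so Z_k anticommutes with Q, and C Z_k C^dagger is a stabilizer of the state
  anticommuting with Z_j.\<close>

lemma stabilizer_state_Z_eigen_or_anticommuting:
  assumes st: "stabilizer_state n \<phi>" and j: "j < n"
  obtains a where "pauli_Z n j *\<^sub>v \<phi> = a \<cdot>\<^sub>v \<phi>"
  | g where "g \<in> pauli_group n" "dagger g = g" "g * g = 1\<^sub>m (2^n)" "g *\<^sub>v \<phi> = \<phi>"
      "g * pauli_Z n j = (-1) \<cdot>\<^sub>m (pauli_Z n j * g)"
proof -
  obtain C where C: "clifford n C" "\<phi> = C *\<^sub>v ket0 n" using st by (auto simp: stabilizer_state_def)
  note c = cliffordD[OF C(1)]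
  have dC: "dagger C \<in> carrier_mat (2^n) (2^n)" using c(1) by simp
  have dagger_C_phi: "dagger C *\<^sub>v \<phi> = ket0 n"
    unfolding C(2) using c(1,3) dC by (intro mult_cancel_left_mat_vec) auto
  obtain Q where Q: "Q \<in> pauli_group n" "C * Q * dagger C = pauli_Z n j"
    using clifford_conj_surj[OF C(1) pauli_Z_in_pauli_group] .
  have Qc: "Q \<in> carrier_mat (2^n) (2^n)" using Q(1) by (rule pauli_group_carrier)
  obtain m p where p: "\<forall>l. p l < 4" "Q = \<i>^m \<cdot>\<^sub>m pauli_op n p" using Q(1) by (rule pauli_groupE)
  have conj_apply: "(C * X * dagger C) *\<^sub>v \<phi> = C *\<^sub>v (X *\<^sub>v ket0 n)" if "X \<in> carrier_mat (2^n) (2^n)" for X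
    using that c(1) dC stabilizer_state_carrier[OF st]
    by (simp add: square_mat_simps[where N="2^n"] dagger_C_phi flip: C(2))
  show thesis
  proof (cases "\<exists>k<n. pauli_flips (p k)")
    case False
    have "pauli_op n p *\<^sub>v ket0 n = ket0 n"
      using False p(1) by (intro pauli_op_ket0) (metis less4_cases pauli_flips_def)
    hence "pauli_Z n j *\<^sub>v \<phi> = \<i>^m \<cdot>\<^sub>v \<phi>"
      unfolding Q(2)[symmetric] conj_apply[OF Qc] using c(1)
      by (simp add: p(2) C(2) smult_mat_mult_vec[of _ "2^n" "2^n"] mult_mat_vec[of _ "2^n" "2^n"])
    thus thesis by (rule that(1))
  next
    case True
    then obtain k where k: "k < n" "pauli_flips (p k)" by blast
    let ?Zk = "pauli_Z n k"
    define g where "g = C * ?Zk * dagger C"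
    have "dagger g = g" "g * g = 1\<^sub>m (2^n)"
      unfolding g_def by (rule unitary_conj_hermitian_involution[OF c(1-3) pauli_Z_carrier
          dagger_pauli_Z pauli_Z_square])+
    moreover have "g *\<^sub>v \<phi> = \<phi>"
      unfolding g_def conj_apply[OF pauli_Z_carrier] by (simp add: pauli_Z_ket0 C(2))
    moreover have "?Zk * Q = (-1) \<cdot>\<^sub>m (Q * ?Zk)"
      using pauli_Z_pauli_op_commute[OF k(1), of p] p k(2)
      by (simp add: square_mat_simps[where N="2^n"] smult_smult_mat mult.commute)
    hence "g * pauli_Z n j = (-1) \<cdot>\<^sub>m (pauli_Z n j * g)"
      unfolding g_def Q(2)[symmetric] by (rule unitary_conj_anticommute[OF c(1,3) pauli_Z_carrier Qc])
    moreover have "g \<in> pauli_group n" unfolding g_def by (rule c(4)[OF pauli_Z_in_pauli_group])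
    ultimately show thesis using that(2) by blast
  qed
qed

definition inv_sqrt2 :: complex where
  "inv_sqrt2 = complex_of_real (1 / sqrt 2)"

lemma inv_sqrt2_sq: "inv_sqrt2 * inv_sqrt2 = 1 / 2"
proof -
  have "inv_sqrt2 * inv_sqrt2 = complex_of_real (1 / sqrt 2 * (1 / sqrt 2))"
    by (simp only: inv_sqrt2_def of_real_mult)
  thus ?thesis by simp
qed

lemma inv_sqrt2_nonzero: "inv_sqrt2 \<noteq> 0"
  and cnj_inv_sqrt2 [simp]: "cnj inv_sqrt2 = inv_sqrt2"
  by (simp_all add: inv_sqrt2_def)

lemma anticommuting_sum_conj:
  fixes g h P :: "complex mat"
  assumes gh: "g \<in> carrier_mat N N" "h \<in> carrier_mat N N" "g * g = 1\<^sub>m N" "h * h = 1\<^sub>m N"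
      "g * h = (-1) \<cdot>\<^sub>m (h * g)"
    and P: "P \<in> carrier_mat N N" "P * g = s1 \<cdot>\<^sub>m (g * P)" "P * h = s2 \<cdot>\<^sub>m (h * P)"
  shows "(g + h) * P * (g + h) = (s1 + s2) \<cdot>\<^sub>m P + (s2 - s1) \<cdot>\<^sub>m (g * (h * P))"
proof -
  let ?G = "g * (h * P)"
  have hg: "h * g = (-1) \<cdot>\<^sub>m (g * h)" using gh by (simp add: smult_smult_mat)
  have "(g + h) * P * (g + h) = (g * (P * g) + h * (P * g)) + (g * (P * h) + h * (P * h))"
    using gh P by (simp add: add_mult_distrib_mat[of _ N N] mult_add_distrib_mat[of _ N N]
        square_mat_simps[where N=N])
  also have "g * (P * g) = s1 \<cdot>\<^sub>m P"
    using gh P mult_cancel_left_mat[OF gh(1,1,3) P(1)] by (simp add: square_mat_simps[where N=N])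
  also have "h * (P * g) = (- s1) \<cdot>\<^sub>m ?G"
  proof -
    have "h * (P * g) = s1 \<cdot>\<^sub>m ((h * g) * P)"
      using gh P by (simp add: square_mat_simps[where N=N])
    thus ?thesis using gh(1,2) P(1) by (simp add: hg smult_smult_mat square_mat_simps[where N=N])
  qed
  also have "g * (P * h) = s2 \<cdot>\<^sub>m ?G"
    using gh P by (simp add: square_mat_simps[where N=N])
  also have "h * (P * h) = s2 \<cdot>\<^sub>m P"
    using gh P mult_cancel_left_mat[OF gh(2,2,4) P(1)] by (simp add: square_mat_simps[where N=N])
  also have "s1 \<cdot>\<^sub>m P + (- s1) \<cdot>\<^sub>m ?G + (s2 \<cdot>\<^sub>m ?G + s2 \<cdot>\<^sub>m P) = (s1 + s2) \<cdot>\<^sub>m P + (s2 - s1) \<cdot>\<^sub>m ?G"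
  proof -
    have "?G \<in> carrier_mat N N" using gh P by simp
    thus ?thesis using P(1) by (intro eq_matI) (simp_all add: algebra_simps del: index_mult_mat)
  qed
  finally show ?thesis .
qed

lemma clifford_anticommuting_sum:
  assumes gh: "g \<in> pauli_group n" "h \<in> pauli_group n" "dagger g = g" "dagger h = h"
    "g * g = 1\<^sub>m (2^n)" "h * h = 1\<^sub>m (2^n)" "g * h = (-1) \<cdot>\<^sub>m (h * g)"
  shows "clifford n (inv_sqrt2 \<cdot>\<^sub>m (g + h))"
proof -
  let ?N = "2^n" and ?W = "inv_sqrt2 \<cdot>\<^sub>m (g + h)"
  have c: "g \<in> carrier_mat ?N ?N" "h \<in> carrier_mat ?N ?N" using gh pauli_group_carrier by auto
  have dW: "dagger ?W = ?W" using c gh by (simp add: dagger_smult dagger_add[of _ ?N ?N])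
  have WXW: "?W * X * dagger ?W = (1/2) \<cdot>\<^sub>m ((g + h) * X * (g + h))" if "X \<in> carrier_mat ?N ?N" for X
    unfolding dW using c that by (simp add: square_mat_simps[where N="?N"] smult_smult_mat inv_sqrt2_sq)
  have conj: "?W * P * dagger ?W = ((s1 + s2) / 2) \<cdot>\<^sub>m P + ((s2 - s1) / 2) \<cdot>\<^sub>m (g * (h * P))"
    if "P \<in> carrier_mat ?N ?N" "P * g = s1 \<cdot>\<^sub>m (g * P)" "P * h = s2 \<cdot>\<^sub>m (h * P)" for P s1 s2
    unfolding WXW[OF that(1)] anticommuting_sum_conj[OF c gh(5-7) that]
    using c that(1) by (intro eq_matI) (auto simp: field_simps)
  have "?W * ?W = ?W * 1\<^sub>m ?N * dagger ?W" using c dW by simp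
  also have "\<dots> = ((1 + 1) / 2) \<cdot>\<^sub>m 1\<^sub>m ?N + ((1 - 1) / 2) \<cdot>\<^sub>m (g * (h * 1\<^sub>m ?N))"
    by (rule conj) (use c in simp_all)
  also have "\<dots> = 1\<^sub>m ?N" using c by (intro eq_matI) auto
  finally have "?W * ?W = 1\<^sub>m ?N" .
  moreover have "?W * P * dagger ?W \<in> pauli_group n" if P: "P \<in> pauli_group n" for P
  proof -
    have Pc: "P \<in> carrier_mat ?N ?N" using P by (rule pauli_group_carrier)
    obtain s1 where s1: "s1 = 1 \<or> s1 = -1" "P * g = s1 \<cdot>\<^sub>m (g * P)"
      using P gh(1) by (rule pauli_group_commute_or_anticommute)
    obtain s2 where s2: "s2 = 1 \<or> s2 = -1" "P * h = s2 \<cdot>\<^sub>m (h * P)"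
      using P gh(2) by (rule pauli_group_commute_or_anticommute)
    have ghP: "g * (h * P) \<in> pauli_group n" using gh P by (intro pauli_group_mult)
    show ?thesis
    proof (cases "s1 = s2")
      case True
      hence "?W * P * dagger ?W = s1 \<cdot>\<^sub>m P"
        unfolding conj[OF Pc s1(2) s2(2)] using c Pc by (intro eq_matI) auto
      thus ?thesis using pauli_group_sign_smult[OF s1(1) P] by simp
    next
      case False
      hence "s2 - s1 = 2 * s2" using s1(1) s2(1) by auto
      hence "?W * P * dagger ?W = s2 \<cdot>\<^sub>m (g * (h * P))"
        unfolding conj[OF Pc s1(2) s2(2)] using c Pc False by (intro eq_matI) auto
      thus ?thesis using pauli_group_sign_smult[OF s2(1) ghP] by simp
    qed
  qed
  ultimately show ?thesis
    using c dW by (simp add: clifford_def unitary_mat_def)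
qed

lemma proj_qubit_Z_eigen:
  assumes v: "v \<in> carrier_vec (2^n)" and j: "j < n" and eig: "pauli_Z n j *\<^sub>v v = a \<cdot>\<^sub>v v"
  shows "proj_qubit n j b *\<^sub>v v = ((1 + (if b then -1 else 1) * a) / 2) \<cdot>\<^sub>v v"
proof (rule eq_vecI)
  fix r assume "r < dim_vec (((1 + (if b then -1 else 1) * a) / 2) \<cdot>\<^sub>v v)"
  hence r: "r < 2^n" using v by simp
  have "(pauli_Z n j *\<^sub>v v) $ r = a * v $ r" using eig r v by simp
  hence "a * v $ r = (if bit r j then -1 else 1) * v $ r" using pauli_Z_mult_vec[OF v j r] by metis
  thus "(proj_qubit n j b *\<^sub>v v) $ r = (((1 + (if b then -1 else 1) * a) / 2) \<cdot>\<^sub>v v) $ r"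
    using r v by (cases "bit r j"; cases b) (auto simp: proj_qubit_mult_vec[OF v j r] field_simps)
qed (use v in simp)

text \<open>With h = \<plusminus>Z_j, the Clifford (g + h)/sqrt 2 maps the state to sqrt 2 times its projection,
  because g acts trivially on it.\<close>

lemma proj_qubit_anticommuting_stabilizer:
  assumes st: "stabilizer_state n \<phi>" and j: "j < n"
    and g: "g \<in> pauli_group n" "dagger g = g" "g * g = 1\<^sub>m (2^n)" "g *\<^sub>v \<phi> = \<phi>"
      "g * pauli_Z n j = (-1) \<cdot>\<^sub>m (pauli_Z n j * g)"
  obtains \<phi>' where "stabilizer_state n \<phi>'" "proj_qubit n j b *\<^sub>v \<phi> = inv_sqrt2 \<cdot>\<^sub>v \<phi>'"
proof -
  have v: "\<phi> \<in> carrier_vec (2^n)" using st by (rule stabilizer_state_carrier)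
  have gc: "g \<in> carrier_mat (2^n) (2^n)" using g(1) by (rule pauli_group_carrier)
  define s :: complex where "s = (if b then -1 else 1)"
  define h where "h = s \<cdot>\<^sub>m pauli_Z n j"
  have hc: "h \<in> carrier_mat (2^n) (2^n)" by (simp add: h_def)
  have s: "s * s = 1" "cnj s = s" "s = 1 \<or> s = -1" by (auto simp: s_def)
  have "h \<in> pauli_group n" unfolding h_def using pauli_group_sign_smult[OF s(3) pauli_Z_in_pauli_group] .
  moreover have "dagger h = h" unfolding h_def by (simp add: dagger_smult dagger_pauli_Z s)
  moreover have "h * h = 1\<^sub>m (2^n)"
    unfolding h_def by (simp add: square_mat_simps[where N="2^n"] smult_smult_mat pauli_Z_square s)
  moreover have "g * h = (-1) \<cdot>\<^sub>m (h * g)"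
    unfolding h_def using gc g(5) by (simp add: square_mat_simps[where N="2^n"] smult_smult_mat mult.commute)
  ultimately have W: "clifford n (inv_sqrt2 \<cdot>\<^sub>m (g + h))"
    using g by (intro clifford_anticommuting_sum)
  have "proj_qubit n j b *\<^sub>v \<phi> = inv_sqrt2 \<cdot>\<^sub>v ((inv_sqrt2 \<cdot>\<^sub>m (g + h)) *\<^sub>v \<phi>)"
  proof (rule eq_vecI)
    fix r assume "r < dim_vec (inv_sqrt2 \<cdot>\<^sub>v ((inv_sqrt2 \<cdot>\<^sub>m (g + h)) *\<^sub>v \<phi>))"
    hence r: "r < 2^n" using gc hc by simp
    have "(inv_sqrt2 \<cdot>\<^sub>v ((inv_sqrt2 \<cdot>\<^sub>m (g + h)) *\<^sub>v \<phi>)) $ r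
        = inv_sqrt2 * (inv_sqrt2 * ((g *\<^sub>v \<phi>) $ r + (h *\<^sub>v \<phi>) $ r))"
      using r gc hc v by (simp add: smult_mat_mult_vec[of _ "2^n" "2^n"] add_mult_distrib_mat_vec[of _ "2^n" "2^n"])
    also have "\<dots> = (\<phi> $ r + s * ((if bit r j then -1 else 1) * \<phi> $ r)) / 2"
      unfolding h_def g(4) mult.assoc[symmetric] inv_sqrt2_sq
      using r v by (simp add: smult_mat_mult_vec[of _ "2^n" "2^n"] pauli_Z_mult_vec[OF v j r])
    also have "\<dots> = (proj_qubit n j b *\<^sub>v \<phi>) $ r"
      by (cases b; cases "bit r j") (simp_all add: proj_qubit_mult_vec[OF v j r] s_def)
    finally show "(proj_qubit n j b *\<^sub>v \<phi>) $ r = (inv_sqrt2 \<cdot>\<^sub>v ((inv_sqrt2 \<cdot>\<^sub>m (g + h)) *\<^sub>v \<phi>)) $ r"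
      by (rule sym)
  qed (use hc in simp)
  thus thesis using that stabilizer_state_clifford[OF W st] by blast
qed

lemma stabilizer_state_proj_qubit:
  assumes st: "stabilizer_state n \<phi>" and j: "j < n"
  obtains a \<phi>' where "stabilizer_state n \<phi>'" "proj_qubit n j b *\<^sub>v \<phi> = a \<cdot>\<^sub>v \<phi>'"
proof (cases rule: stabilizer_state_Z_eigen_or_anticommuting[OF st j])
  case (1 a)
  thus thesis using that st proj_qubit_Z_eigen[OF stabilizer_state_carrier[OF st] j] by blast
next
  case (2 g)
  thus thesis using that proj_qubit_anticommuting_stabilizer[OF st j] by metis
qed

definition proj_ones :: "nat \<Rightarrow> nat set \<Rightarrow> complex mat" where
  "proj_ones n S = ntensor n (\<lambda>j. if j \<in> S then qubit_proj True else 1\<^sub>m 2)"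

lemma proj_ones_carrier [simp]: "proj_ones n S \<in> carrier_mat (2^n) (2^n)"
  by (simp add: proj_ones_def)

lemma stabilizer_state_proj_ones:
  assumes st: "stabilizer_state n \<phi>" and S: "S \<subseteq> {..<n}"
  obtains a \<phi>' where "stabilizer_state n \<phi>'" "proj_ones n S *\<^sub>v \<phi> = a \<cdot>\<^sub>v \<phi>'"
proof -
  have "finite S" using S finite_subset by blast
  hence "\<exists>a \<phi>'. stabilizer_state n \<phi>' \<and> proj_ones n S *\<^sub>v \<phi> = a \<cdot>\<^sub>v \<phi>'"
    using S
  proof (induction S rule: finite_subset_induct)
    case empty
    have "proj_ones n {} = 1\<^sub>m (2^n)" by (simp add: proj_ones_def ntensor_one)
    thus ?case using st stabilizer_state_carrier[OF st] by (intro exI[of _ 1] exI[of _ \<phi>]) simp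
  next
    case (insert k F)
    obtain a \<phi>1 where a: "stabilizer_state n \<phi>1" "proj_ones n F *\<^sub>v \<phi> = a \<cdot>\<^sub>v \<phi>1"
      using insert.IH by blast
    obtain c \<phi>2 where c: "stabilizer_state n \<phi>2" "proj_qubit n k True *\<^sub>v \<phi>1 = c \<cdot>\<^sub>v \<phi>2"
      using stabilizer_state_proj_qubit[OF a(1)] insert.hyps(2) by blast
    have "proj_ones n (insert k F) = proj_qubit n k True * proj_ones n F"
      unfolding proj_ones_def proj_qubit_def using insert.hyps(3)
      by (subst ntensor_mult) (auto simp: qubit_proj_def mat2_one intro!: ntensor_cong)
    hence "proj_ones n (insert k F) *\<^sub>v \<phi> = (a * c) \<cdot>\<^sub>v \<phi>2"
      using stabilizer_state_carrier[OF st] stabilizer_state_carrier[OF a(1)] a(2) c(2)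
      by (simp add: square_mat_simps[where N="2^n"] proj_ones_def mult_mat_vec[of _ "2^n" "2^n"]
          smult_smult_assoc mult.commute)
    thus ?case using c(1) by blast
  qed
  thus thesis using that by blast
qed

section \<open>Stabilizer states have amplitudes of equal modulus\<close>

lemma pauli_op_mult_vec_norm:
  assumes p: "\<And>l. p l < 4" and m: "m < 2^n" "\<And>l. l < n \<Longrightarrow> bit m l = pauli_flips (p l)"
    and v: "v \<in> carrier_vec (2^n)" and r: "r < 2^n"
  shows "cmod ((pauli_op n p *\<^sub>v v) $ r) = cmod (v $ (xor r m))"
proof -
  have "(pauli_op n p *\<^sub>v v) $ r = (\<Prod>l<n. bentry (pauli1 (p l)) (bit r l) (bit r l \<noteq> bit m l)) * v $ (xor r m)"
    unfolding pauli_op_def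
    by (rule ntensor_mult_vec_flip[OF _ _ m(1) v r]) (auto simp: m(2) intro!: bentry_pauli1_eq_0 p)
  moreover have "(\<Prod>l<n. cmod (bentry (pauli1 (p l)) (bit r l) (bit r l \<noteq> bit m l))) = 1"
    using norm_bentry_pauli1[OF p] m(2) by (intro prod.neutral) simp
  ultimately show ?thesis by (simp add: norm_mult prod_norm)
qed

lemma anticommuting_stabilizer_flips:
  assumes st: "stabilizer_state n \<phi>" and j: "j < n"
    and g: "g = \<i>^m \<cdot>\<^sub>m pauli_op n p" "\<And>l. p l < 4" "g *\<^sub>v \<phi> = \<phi>"
      "g * pauli_Z n j = (-1) \<cdot>\<^sub>m (pauli_Z n j * g)"
  shows "pauli_flips (p j)"
proof (rule ccontr)
  assume "\<not> pauli_flips (p j)"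
  have v: "\<phi> \<in> carrier_vec (2^n)" using st by (rule stabilizer_state_carrier)
  have gc: "g \<in> carrier_mat (2^n) (2^n)" unfolding g(1) by simp
  have "g * pauli_Z n j = pauli_Z n j * g"
    unfolding g(1) using pauli_Z_pauli_op_commute[OF j g(2)] \<open>\<not> pauli_flips (p j)\<close>
    by (simp add: square_mat_simps[where N="2^n"])
  hence "pauli_Z n j * g = (-1) \<cdot>\<^sub>m (pauli_Z n j * g)" using g(4) by simp
  hence "(pauli_Z n j * g) *\<^sub>v \<phi> = ((-1) \<cdot>\<^sub>m (pauli_Z n j * g)) *\<^sub>v \<phi>"
    by (rule arg_cong[where f = "\<lambda>M. M *\<^sub>v \<phi>"])
  moreover have "(pauli_Z n j * g) *\<^sub>v \<phi> = pauli_Z n j *\<^sub>v \<phi>"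
    using gc v g(3) by (simp add: square_mat_simps[where N="2^n"])
  ultimately have Z_neg: "pauli_Z n j *\<^sub>v \<phi> = (-1) \<cdot>\<^sub>v (pauli_Z n j *\<^sub>v \<phi>)"
    using gc v by (simp add: smult_mat_mult_vec[of _ "2^n" "2^n"] square_mat_simps[where N="2^n"])
  have "(pauli_Z n j *\<^sub>v \<phi>) $ r = 0" if "r < 2^n" for r
    using arg_cong[OF Z_neg, of "\<lambda>w. w $ r"] that by simp
  hence "\<phi> $ r = 0" if "r < 2^n" for r
    using that pauli_Z_mult_vec[OF v j that] by (simp split: if_splits)
  thus False using stabilizer_state_nonzero[OF st] by metis
qed

definition unfixed_qubits :: "nat \<Rightarrow> complex vec \<Rightarrow> nat set" where
  "unfixed_qubits n \<phi> = {j. j < n \<and> \<not> (\<exists>a. pauli_Z n j *\<^sub>v \<phi> = a \<cdot>\<^sub>v \<phi>)}"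

lemma Z_eigen_support_bit:
  assumes v: "v \<in> carrier_vec (2^n)" and j: "j < n" and eig: "pauli_Z n j *\<^sub>v v = a \<cdot>\<^sub>v v"
    and x: "x < 2^n" "v $ x \<noteq> 0" and y: "y < 2^n" "v $ y \<noteq> 0"
  shows "bit x j = bit y j"
proof -
  have "(if bit z j then -1 else 1) = a" if z: "z < 2^n" "v $ z \<noteq> 0" for z
  proof -
    have "(pauli_Z n j *\<^sub>v v) $ z = a * v $ z" using eig z(1) v by simp
    hence "(if bit z j then -1 else 1) * v $ z = a * v $ z" using pauli_Z_mult_vec[OF v j z(1)] by metis
    thus ?thesis using z(2) by simp
  qed
  from this[OF x] this[OF y] show ?thesis by (auto split: if_splits)
qed

lemma unfixed_qubits_subset: "unfixed_qubits n \<phi> \<subseteq> {..<n}"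
  by (auto simp: unfixed_qubits_def)

lemma unfixed_qubits_proj:
  assumes v: "v \<in> carrier_vec (2^n)" and j: "j < n" and w: "w \<in> carrier_vec (2^n)"
    and w_eq: "\<And>r. r < 2^n \<Longrightarrow> w $ r = (if bit r j then 0 else c * v $ r)"
  shows "unfixed_qubits n w \<subseteq> unfixed_qubits n v - {j}"
proof
  fix i assume "i \<in> unfixed_qubits n w"
  hence i: "i < n" and nd: "\<not> (\<exists>a. pauli_Z n i *\<^sub>v w = a \<cdot>\<^sub>v w)" by (auto simp: unfixed_qubits_def)
  have "pauli_Z n j *\<^sub>v w = 1 \<cdot>\<^sub>v w"
    by (rule eq_vecI) (use w in \<open>auto simp: pauli_Z_mult_vec[OF w j] w_eq simp del: index_mult_mat_vec\<close>)
  hence "i \<noteq> j" using nd by blast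
  moreover have "i \<in> unfixed_qubits n v"
  proof (rule ccontr)
    assume "i \<notin> unfixed_qubits n v"
    then obtain a where a: "pauli_Z n i *\<^sub>v v = a \<cdot>\<^sub>v v" using i by (auto simp: unfixed_qubits_def)
    have "pauli_Z n i *\<^sub>v w = a \<cdot>\<^sub>v w"
    proof (rule eq_vecI)
      fix r assume "r < dim_vec (a \<cdot>\<^sub>v w)"
      hence r: "r < 2^n" using w by simp
      have "(pauli_Z n i *\<^sub>v v) $ r = a * v $ r" using a r v by simp
      hence "(if bit r i then -1 else 1) * v $ r = a * v $ r" using pauli_Z_mult_vec[OF v i r] by simp
      thus "(pauli_Z n i *\<^sub>v w) $ r = (a \<cdot>\<^sub>v w) $ r"
        using r w by (auto simp: pauli_Z_mult_vec[OF w i r] w_eq)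
    qed (use w in simp)
    thus False using nd by blast
  qed
  ultimately show "i \<in> unfixed_qubits n v - {j}" by simp
qed

lemma finite_unfixed_qubits: "finite (unfixed_qubits n \<phi>)"
  using unfixed_qubits_subset by (rule finite_subset) simp

lemma anticommuting_stabilizer_support_representative:
  assumes st: "stabilizer_state n \<phi>" and j: "j < n"
    and g: "g \<in> pauli_group n" "g *\<^sub>v \<phi> = \<phi>" "g * pauli_Z n j = (-1) \<cdot>\<^sub>m (pauli_Z n j * g)"
    and z: "z < 2^n" "\<phi> $ z \<noteq> 0"
  obtains z' where "z' < 2^n" "\<not> bit z' j" "\<phi> $ z' \<noteq> 0" "cmod (\<phi> $ z') = cmod (\<phi> $ z)"
proof (cases "bit z j")
  case True
  have v: "\<phi> \<in> carrier_vec (2^n)" using st by (rule stabilizer_state_carrier)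
  obtain k p where p: "\<forall>l. p l < 4" "g = \<i>^k \<cdot>\<^sub>m pauli_op n p" using g(1) by (rule pauli_groupE)
  have "pauli_flips (p j)"
    by (rule anticommuting_stabilizer_flips[OF st j p(2)]) (use p(1) g(2,3) in auto)
  obtain m :: nat where m: "m < 2^n" "\<forall>l<n. bit m l = pauli_flips (p l)"
    using ex_less_pow2_with_bits[of n "\<lambda>l. pauli_flips (p l)"] by blast
  have "cmod (\<phi> $ z) = cmod ((g *\<^sub>v \<phi>) $ z)" using g(2) by simp
  also have "\<dots> = cmod ((pauli_op n p *\<^sub>v \<phi>) $ z)"
    unfolding p(2) using v z by (simp add: smult_mat_mult_vec[of _ "2^n" "2^n"] norm_mult norm_power)
  also have "\<dots> = cmod (\<phi> $ (xor z m))"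
    by (rule pauli_op_mult_vec_norm[OF _ m(1) _ v z(1)]) (use p(1) m(2) in auto)
  finally have eq: "cmod (\<phi> $ z) = cmod (\<phi> $ (xor z m))" .
  moreover have "\<phi> $ (xor z m) \<noteq> 0" using eq z(2) by auto
  moreover have "\<not> bit (xor z m) j" using True \<open>pauli_flips (p j)\<close> j m(2) by (simp add: bit_xor_iff)
  ultimately show thesis by (intro that[OF xor_less_pow2[OF z(1) m(1)]]) simp_all
qed (use that z in blast)

lemma unfixed_qubit_anticommuting_stabilizer:
  assumes st: "stabilizer_state n \<phi>" and j: "j \<in> unfixed_qubits n \<phi>"
  obtains g where "g \<in> pauli_group n" "dagger g = g" "g * g = 1\<^sub>m (2^n)" "g *\<^sub>v \<phi> = \<phi>"
    "g * pauli_Z n j = (-1) \<cdot>\<^sub>m (pauli_Z n j * g)"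
proof -
  have jn: "j < n" using j by (simp add: unfixed_qubits_def)
  show thesis
  proof (cases rule: stabilizer_state_Z_eigen_or_anticommuting[OF st jn])
    case (1 a)
    thus thesis using j by (auto simp: unfixed_qubits_def)
  qed (rule that)
qed

lemma unfixed_qubit_proj_zero:
  assumes st: "stabilizer_state n \<phi>" and j: "j \<in> unfixed_qubits n \<phi>"
  obtains \<phi>0 where "stabilizer_state n \<phi>0" "card (unfixed_qubits n \<phi>0) < card (unfixed_qubits n \<phi>)"
    "\<And>r. r < 2^n \<Longrightarrow> \<phi>0 $ r = (if bit r j then 0 else 1 / inv_sqrt2 * \<phi> $ r)"
proof -
  have v: "\<phi> \<in> carrier_vec (2^n)" using st by (rule stabilizer_state_carrier)
  have jn: "j < n" using j by (simp add: unfixed_qubits_def)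
  obtain g where g: "g \<in> pauli_group n" "dagger g = g" "g * g = 1\<^sub>m (2^n)" "g *\<^sub>v \<phi> = \<phi>"
    "g * pauli_Z n j = (-1) \<cdot>\<^sub>m (pauli_Z n j * g)"
    using unfixed_qubit_anticommuting_stabilizer[OF st j] .
  obtain \<phi>0 where \<phi>0: "stabilizer_state n \<phi>0" "proj_qubit n j False *\<^sub>v \<phi> = inv_sqrt2 \<cdot>\<^sub>v \<phi>0"
    using proj_qubit_anticommuting_stabilizer[OF st jn g] .
  have v0: "\<phi>0 \<in> carrier_vec (2^n)" using \<phi>0(1) by (rule stabilizer_state_carrier)
  have index: "\<phi>0 $ r = (if bit r j then 0 else 1 / inv_sqrt2 * \<phi> $ r)" if r: "r < 2^n" for r
    using arg_cong[OF \<phi>0(2), of "\<lambda>w. w $ r"] proj_qubit_mult_vec[OF v jn r] r v0 inv_sqrt2_nonzero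
    by (auto simp: field_simps split: if_splits)
  have "card (unfixed_qubits n \<phi>0) \<le> card (unfixed_qubits n \<phi> - {j})"
    using unfixed_qubits_proj[OF v jn v0 index] finite_unfixed_qubits by (intro card_mono) auto
  also have "\<dots> < card (unfixed_qubits n \<phi>)"
    using j finite_unfixed_qubits by (intro card_Diff1_less)
  finally show thesis using that \<phi>0(1) index by blast
qed

text \<open>Induction on the number of qubits j for which the state is not a Z_j-eigenvector. If there
  is none, the support is a single string. Otherwise a stabilizer anticommuting with Z_j pairs
  every support string with one whose bit j is 0 and whose amplitude has the same modulus, and the
  projection onto bit j = 0 is, up to a factor, a stabilizer state with fewer such qubits.\<close>

lemma stabilizer_state_uniform_amplitudes:
  "stabilizer_state n \<phi> \<Longrightarrow> x < 2^n \<Longrightarrow> y < 2^n \<Longrightarrow> \<phi> $ x \<noteq> 0 \<Longrightarrow> \<phi> $ y \<noteq> 0 \<Longrightarrow>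
   cmod (\<phi> $ x) = cmod (\<phi> $ y)"
proof (induction "card (unfixed_qubits n \<phi>)" arbitrary: \<phi> x y rule: less_induct)
  case less
  note st = less.prems(1) and x = less.prems(2,4) and y = less.prems(3,5)
  have v: "\<phi> \<in> carrier_vec (2^n)" using st by (rule stabilizer_state_carrier)
  show ?case
  proof (cases "unfixed_qubits n \<phi> = {}")
    case True
    have "bit x j = bit y j" if "j < n" for j
    proof -
      have "j \<notin> unfixed_qubits n \<phi>" using True by simp
      then obtain a where "pauli_Z n j *\<^sub>v \<phi> = a \<cdot>\<^sub>v \<phi>" using \<open>j < n\<close> by (auto simp: unfixed_qubits_def)
      thus ?thesis using Z_eigen_support_bit[OF v that _ x y] by blast
    qed
    thus ?thesis using nat_eq_if_low_bits_eq[OF x(1) y(1)] by simp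
  next
    case False
    then obtain j where j: "j \<in> unfixed_qubits n \<phi>" by blast
    hence jn: "j < n" by (simp add: unfixed_qubits_def)
    obtain g where g: "g \<in> pauli_group n" "dagger g = g" "g * g = 1\<^sub>m (2^n)" "g *\<^sub>v \<phi> = \<phi>"
      "g * pauli_Z n j = (-1) \<cdot>\<^sub>m (pauli_Z n j * g)"
      using unfixed_qubit_anticommuting_stabilizer[OF st j] .
    obtain \<phi>0 where \<phi>0: "stabilizer_state n \<phi>0" "card (unfixed_qubits n \<phi>0) < card (unfixed_qubits n \<phi>)"
      "\<And>r. r < 2^n \<Longrightarrow> \<phi>0 $ r = (if bit r j then 0 else 1 / inv_sqrt2 * \<phi> $ r)"
      using unfixed_qubit_proj_zero[OF st j] by blast
    obtain x' where x': "x' < 2^n" "\<not> bit x' j" "\<phi> $ x' \<noteq> 0" "cmod (\<phi> $ x') = cmod (\<phi> $ x)"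
      using anticommuting_stabilizer_support_representative[OF st jn g(1,4,5) x] .
    obtain y' where y': "y' < 2^n" "\<not> bit y' j" "\<phi> $ y' \<noteq> 0" "cmod (\<phi> $ y') = cmod (\<phi> $ y)"
      using anticommuting_stabilizer_support_representative[OF st jn g(1,4,5) y] .
    have "\<phi>0 $ x' \<noteq> 0" "\<phi>0 $ y' \<noteq> 0"
      using \<phi>0(3) x'(1,2,3) y'(1,2,3) inv_sqrt2_nonzero by simp_all
    hence "cmod (\<phi>0 $ x') = cmod (\<phi>0 $ y')" by (rule less.hyps[OF \<phi>0(2,1) x'(1) y'(1)])
    hence "cmod (\<phi> $ x') = cmod (\<phi> $ y')"
      using \<phi>0(3)[OF x'(1)] \<phi>0(3)[OF y'(1)] x'(2) y'(2) inv_sqrt2_nonzero by (simp add: norm_divide)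
    thus ?thesis using x'(4) y'(4) by simp
  qed
qed

section \<open>Amplitude damping\<close>

definition AD_factor :: "real \<Rightarrow> bool \<Rightarrow> complex mat" where
  "AD_factor \<gamma> b = (if b then AD_K1 \<gamma> else AD_K0 \<gamma>)"

lemma AD_factor_carrier [simp]: "AD_factor \<gamma> b \<in> carrier_mat 2 2"
  by (simp add: AD_factor_def AD_K0_def AD_K1_def mat2_of_rows_list)

lemma bentry_AD_factor:
  "bentry (AD_factor \<gamma> b) x y =
    (if b then (if \<not> x \<and> y then complex_of_real (sqrt \<gamma>) else 0)
     else (if x = y then (if x then complex_of_real (sqrt (1 - \<gamma>)) else 1) else 0))"
  by (auto simp: AD_factor_def AD_K0_def AD_K1_def mat2_of_rows_list)

lemma AD_kraus_ntensor: "AD_kraus n \<gamma> s = ntensor n (\<lambda>j. AD_factor \<gamma> (bit s j))"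
  by (simp add: AD_kraus_def AD_factor_def)

lemma AD_kraus_carrier [simp]: "AD_kraus n \<gamma> s \<in> carrier_mat (2^n) (2^n)"
  and AD_kraus_dims [simp]: "dim_row (AD_kraus n \<gamma> s) = 2^n" "dim_col (AD_kraus n \<gamma> s) = 2^n"
  by (simp_all add: AD_kraus_def)

text \<open>The Kraus operator indexed by s lowers exactly the qubits in s.\<close>

definition kraus_amp :: "nat \<Rightarrow> real \<Rightarrow> nat \<Rightarrow> nat \<Rightarrow> complex" where
  "kraus_amp n \<gamma> s r = (\<Prod>j<n. bentry (AD_factor \<gamma> (bit s j)) (bit r j) (bit r j \<noteq> bit s j))"

lemma AD_kraus_mult_vec:
  assumes "v \<in> carrier_vec (2^n)" "s < 2^n" "r < 2^n"
  shows "(AD_kraus n \<gamma> s *\<^sub>v v) $ r = kraus_amp n \<gamma> s r * v $ (xor r s)"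
  unfolding AD_kraus_ntensor kraus_amp_def
  by (rule ntensor_mult_vec_flip[OF _ _ assms(2,1,3)]) (auto simp: bentry_AD_factor)

lemma kraus_amp_disjoint:
  assumes "\<And>j. j < n \<Longrightarrow> bit s j \<Longrightarrow> \<not> bit r j"
  shows "kraus_amp n \<gamma> s r =
    complex_of_real (sqrt \<gamma>) ^ hamming_weight n s * complex_of_real (sqrt (1 - \<gamma>)) ^ hamming_weight n r"
proof -
  have pow: "(\<Prod>j<n. if P j then a else 1) = a ^ card {j. j < n \<and> P j}" for P and a :: complex
    by (subst prod.mono_neutral_cong_right[where S = "{j. j < n \<and> P j}"]) auto
  have "kraus_amp n \<gamma> s r = (\<Prod>j<n. (if bit s j then complex_of_real (sqrt \<gamma>) else 1) *
      (if bit r j then complex_of_real (sqrt (1 - \<gamma>)) else 1))"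
    unfolding kraus_amp_def using assms by (intro prod.cong refl) (auto simp: bentry_AD_factor)
  thus ?thesis by (simp add: prod.distrib pow hamming_weight_def)
qed

lemma kraus_amp_overlap: "j < n \<Longrightarrow> bit s j \<Longrightarrow> bit r j \<Longrightarrow> kraus_amp n \<gamma> s r = 0"
  unfolding kraus_amp_def by (auto simp: bentry_AD_factor intro!: prod_zero bexI[of _ j])

lemma sum_sq_norm_kraus_amp:
  assumes "0 \<le> \<gamma>" "\<gamma> \<le> 1"
  shows "(\<Sum>s<(2::nat)^n. (cmod (kraus_amp n \<gamma> s (xor x s)))^2) = 1"
proof -
  let ?F = "\<lambda>j b. (cmod (bentry (AD_factor \<gamma> b) (bit x j \<noteq> b) (bit x j)))^2"
  have "(\<Sum>s<(2::nat)^n. (cmod (kraus_amp n \<gamma> s (xor x s)))^2) = (\<Sum>s<(2::nat)^n. \<Prod>j<n. ?F j (bit s j))"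
  proof (intro sum.cong refl)
    fix s
    have "((a = (\<not> b)) = (\<not> b)) = a" for a b by auto
    thus "(cmod (kraus_amp n \<gamma> s (xor x s)))^2 = (\<Prod>j<n. ?F j (bit s j))"
      by (simp add: kraus_amp_def bit_xor_iff prod_power_distrib flip: prod_norm)
  qed
  also have "\<dots> = (\<Prod>j<n. ?F j False + ?F j True)" by (rule sum_pow2_prod_bits)
  also have "\<dots> = 1" using assms by (intro prod.neutral) (auto simp: bentry_AD_factor)
  finally show ?thesis .
qed

lemma xor_reindex: "s < 2^n \<Longrightarrow> (\<Sum>r<(2::nat)^n. f r (xor r s)) = (\<Sum>x<(2::nat)^n. f (xor x s) x)"
  by (rule sum.reindex_bij_witness[of _ "\<lambda>x. xor x s" "\<lambda>x. xor x s"])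
    (auto simp: xor_xor_cancel xor_less_pow2)

lemma AD_kraus_trace_preserving:
  assumes "0 \<le> \<gamma>" "\<gamma> \<le> 1" and v: "v \<in> carrier_vec (2^n)"
  shows "(\<Sum>s<2^n. sq_norm_vec n (AD_kraus n \<gamma> s *\<^sub>v v)) = sq_norm_vec n v"
proof -
  have "(\<Sum>s<2^n. sq_norm_vec n (AD_kraus n \<gamma> s *\<^sub>v v))
      = (\<Sum>s<(2::nat)^n. \<Sum>r<(2::nat)^n. (cmod (kraus_amp n \<gamma> s r))^2 * (cmod (v $ (xor r s)))^2)"
    unfolding sq_norm_vec_def by (intro sum.cong refl) (simp add: AD_kraus_mult_vec[OF v] norm_mult power_mult_distrib del: index_mult_mat_vec)
  also have "\<dots> = (\<Sum>s<(2::nat)^n. \<Sum>x<(2::nat)^n. (cmod (kraus_amp n \<gamma> s (xor x s)))^2 * (cmod (v $ x))^2)"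
    by (intro sum.cong refl xor_reindex[where f = "\<lambda>r y. (cmod (kraus_amp n \<gamma> _ r))^2 * (cmod (v $ y))^2"])
      simp
  also have "\<dots> = (\<Sum>x<(2::nat)^n. (cmod (v $ x))^2 * (\<Sum>s<(2::nat)^n. (cmod (kraus_amp n \<gamma> s (xor x s)))^2))"
    by (subst sum.swap) (simp add: sum_distrib_left mult.commute)
  also have "\<dots> = sq_norm_vec n v" using sum_sq_norm_kraus_amp[OF assms(1,2)] by (simp add: sq_norm_vec_def)
  finally show ?thesis .
qed

lemma proj_index: "r < dim_vec v \<Longrightarrow> c < dim_vec v \<Longrightarrow> proj v $$ (r,c) = v $ r * cnj (v $ c)"
  by (simp add: proj_def)

lemma conj_proj:
  assumes K: "K \<in> carrier_mat N N" and v: "v \<in> carrier_vec N"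
  shows "K * proj v * dagger K = proj (K *\<^sub>v v)"
proof (rule eq_matI)
  fix r c assume "r < dim_row (proj (K *\<^sub>v v))" "c < dim_col (proj (K *\<^sub>v v))"
  hence r: "r < N" and c: "c < N" using K by (auto simp: proj_def)
  have "(K * proj v * dagger K) $$ (r,c) = (\<Sum>l<N. (\<Sum>k<N. K $$ (r,k) * v $ k) * cnj (v $ l) * cnj (K $$ (c,l)))"
    using K v r c by (simp add: proj_def scalar_prod_def dagger_def sum_distrib_right mult.assoc atLeast0LessThan)
  also have "\<dots> = (K *\<^sub>v v) $ r * cnj ((K *\<^sub>v v) $ c)"
    using K v r c by (simp add: scalar_prod_def sum_distrib_left sum_distrib_right atLeast0LessThan ac_simps)
  finally show "(K * proj v * dagger K) $$ (r,c) = proj (K *\<^sub>v v) $$ (r,c)"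
    using K r c by (simp add: proj_def)
qed (use K v in \<open>auto simp: proj_def\<close>)

lemma AD_channel_proj_index:
  assumes "v \<in> carrier_vec (2^n)" "r < 2^n" "c < 2^n"
  shows "AD_channel n \<gamma> (proj v) $$ (r,c) =
    (\<Sum>s<2^n. (AD_kraus n \<gamma> s *\<^sub>v v) $ r * cnj ((AD_kraus n \<gamma> s *\<^sub>v v) $ c))"
  using assms by (simp add: AD_channel_def conj_proj[OF AD_kraus_carrier assms(1)] proj_index)

text \<open>Each Kraus branch of a pure state that is a multiple of a stabilizer state contributes its
  squared norm times that stabilizer state; trace preservation makes these weights sum to 1.\<close>

lemma AD_channel_in_stab_polytope:
  assumes "0 \<le> \<gamma>" "\<gamma> \<le> 1" and st: "stabilizer_state n \<psi>"
    and branches: "\<And>s. s < 2^n \<Longrightarrow> \<exists>a \<phi>. stabilizer_state n \<phi> \<and> AD_kraus n \<gamma> s *\<^sub>v \<psi> = a \<cdot>\<^sub>v \<phi>"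
  shows "AD_channel n \<gamma> (proj \<psi>) \<in> stab_polytope n"
proof -
  have v: "\<psi> \<in> carrier_vec (2^n)" using st by (rule stabilizer_state_carrier)
  obtain a \<Phi> where branch: "\<And>s. s < 2^n \<Longrightarrow> stabilizer_state n (\<Phi> s) \<and> AD_kraus n \<gamma> s *\<^sub>v \<psi> = a s \<cdot>\<^sub>v \<Phi> s"
    using branches by metis
  have \<Phi>: "\<Phi> s \<in> carrier_vec (2^n)" if "s < 2^n" for s
    using branch[OF that] stabilizer_state_carrier by blast
  define p where "p s = (cmod (a s))^2" for s
  have "(\<Sum>s<2^n. p s) = (\<Sum>s<2^n. sq_norm_vec n (AD_kraus n \<gamma> s *\<^sub>v \<psi>))"
    using branch by (intro sum.cong refl) (simp add: p_def sq_norm_vec_smult \<Phi> sq_norm_stabilizer_state)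
  also have "\<dots> = 1"
    using AD_kraus_trace_preserving[OF assms(1,2) v] sq_norm_stabilizer_state[OF st] by simp
  finally have p1: "(\<Sum>s<2^n. p s) = 1" .
  have "AD_channel n \<gamma> (proj \<psi>) = mat (2^n) (2^n) (\<lambda>(r,c). \<Sum>s<2^n. complex_of_real (p s) * proj (\<Phi> s) $$ (r,c))"
  proof (rule eq_matI)
    fix r c assume "r < dim_row (mat (2^n) (2^n) (\<lambda>(r,c). \<Sum>s<2^n. complex_of_real (p s) * proj (\<Phi> s) $$ (r,c)))"
      "c < dim_col (mat (2^n) (2^n) (\<lambda>(r,c). \<Sum>s<2^n. complex_of_real (p s) * proj (\<Phi> s) $$ (r,c)))"
    hence r: "r < 2^n" and c: "c < 2^n" by auto
    have "(AD_kraus n \<gamma> s *\<^sub>v \<psi>) $ r * cnj ((AD_kraus n \<gamma> s *\<^sub>v \<psi>) $ c) = complex_of_real (p s) * proj (\<Phi> s) $$ (r,c)"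
      if s: "s < 2^n" for s
    proof -
      have "(AD_kraus n \<gamma> s *\<^sub>v \<psi>) $ r * cnj ((AD_kraus n \<gamma> s *\<^sub>v \<psi>) $ c)
          = (cnj (a s) * a s) * (\<Phi> s $ r * cnj (\<Phi> s $ c))"
        using branch[OF s] \<Phi>[OF s] r c by simp
      thus ?thesis using \<Phi>[OF s] r c by (simp add: cnj_mult_self p_def proj_index)
    qed
    thus "AD_channel n \<gamma> (proj \<psi>) $$ (r,c) = mat (2^n) (2^n) (\<lambda>(r,c). \<Sum>s<2^n. complex_of_real (p s) * proj (\<Phi> s) $$ (r,c)) $$ (r,c)"
      using r c by (simp add: AD_channel_proj_index[OF v r c])
  qed (simp_all add: AD_channel_def)
  moreover have "\<forall>s<2^n. p s \<ge> 0 \<and> stabilizer_state n (\<Phi> s)" using branch by (simp add: p_def)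
  ultimately show ?thesis using p1 unfolding stab_polytope_def by blast
qed

lemma AD_kraus_gamma0_mult_vec:
  assumes v: "v \<in> carrier_vec (2^n)" and s: "s < 2^n"
  shows "AD_kraus n 0 s *\<^sub>v v = (if s = 0 then 1 else 0) \<cdot>\<^sub>v v"
proof (rule eq_vecI)
  fix r assume "r < dim_vec ((if s = 0 then 1 else 0) \<cdot>\<^sub>v v)"
  hence r: "r < 2^n" using v by simp
  have "kraus_amp n 0 s r = (if s = 0 then 1 else 0)"
  proof (cases "s = 0")
    case False
    then obtain j where "j < n" "bit s j" using ex_low_bit_if_nonzero[OF s] by blast
    thus ?thesis using False by (auto simp: kraus_amp_def bentry_AD_factor intro!: prod_zero bexI[of _ j])
  qed (auto simp: kraus_amp_def bentry_AD_factor intro!: prod.neutral)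
  thus "(AD_kraus n 0 s *\<^sub>v v) $ r = ((if s = 0 then 1 else 0) \<cdot>\<^sub>v v) $ r"
    using r v by (simp add: AD_kraus_mult_vec[OF v s r] del: index_mult_mat_vec)
qed (use v in simp)

lemma AD_kraus_gamma1_mult_vec:
  assumes v: "v \<in> carrier_vec (2^n)" and s: "s < 2^n"
  shows "AD_kraus n 1 s *\<^sub>v v = (v $ s) \<cdot>\<^sub>v ket0 n"
proof (rule eq_vecI)
  fix r assume "r < dim_vec ((v $ s) \<cdot>\<^sub>v ket0 n)"
  hence r: "r < 2^n" by simp
  have "kraus_amp n 1 s r = (if r = 0 then 1 else 0)"
  proof (cases "r = 0")
    case False
    then obtain j where "j < n" "bit r j" using ex_low_bit_if_nonzero[OF r] by blast
    thus ?thesis using False by (auto simp: kraus_amp_def bentry_AD_factor intro!: prod_zero bexI[of _ j])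
  qed (auto simp: kraus_amp_def bentry_AD_factor intro!: prod.neutral)
  thus "(AD_kraus n 1 s *\<^sub>v v) $ r = ((v $ s) \<cdot>\<^sub>v ket0 n) $ r"
    using r by (simp add: AD_kraus_mult_vec[OF v s r] ket0_index del: index_mult_mat_vec)
qed simp

lemma AD_channel_endpoints_in_stab_polytope:
  assumes "stabilizer_state n \<psi>" "\<gamma> = 0 \<or> \<gamma> = 1"
  shows "AD_channel n \<gamma> (proj \<psi>) \<in> stab_polytope n"
  using assms(2)
proof
  assume "\<gamma> = 0"
  show ?thesis unfolding \<open>\<gamma> = 0\<close>
  proof (rule AD_channel_in_stab_polytope[OF _ _ assms(1)])
    fix s :: nat assume "s < 2^n"
    thus "\<exists>a \<phi>. stabilizer_state n \<phi> \<and> AD_kraus n 0 s *\<^sub>v \<psi> = a \<cdot>\<^sub>v \<phi>"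
      using assms(1) stabilizer_state_carrier[OF assms(1)] AD_kraus_gamma0_mult_vec by blast
  qed simp_all
next
  assume "\<gamma> = 1"
  thus ?thesis using assms(1) stabilizer_state_carrier[OF assms(1)] stabilizer_state_ket0
    by (intro AD_channel_in_stab_polytope) (auto simp: AD_kraus_gamma1_mult_vec)
qed

definition lower_op :: "nat \<Rightarrow> nat \<Rightarrow> complex mat" where
  "lower_op n s = ntensor n (\<lambda>j. if bit s j then mat2 0 1 0 0 else 1\<^sub>m 2)"

lemma lower_op_carrier [simp]: "lower_op n s \<in> carrier_mat (2^n) (2^n)"
  and lower_op_dims [simp]: "dim_row (lower_op n s) = 2^n" "dim_col (lower_op n s) = 2^n"
  by (simp_all add: lower_op_def)

lemma lower_op_mult_vec:
  assumes v: "v \<in> carrier_vec (2^n)" and s: "s < 2^n" and r: "r < 2^n"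
  shows "(lower_op n s *\<^sub>v v) $ r = (if \<forall>j<n. bit s j \<longrightarrow> \<not> bit r j then 1 else 0) * v $ (xor r s)"
proof -
  have "(lower_op n s *\<^sub>v v) $ r =
      (\<Prod>j<n. bentry (if bit s j then mat2 0 1 0 0 else 1\<^sub>m 2) (bit r j) (bit r j \<noteq> bit s j)) * v $ (xor r s)"
    unfolding lower_op_def by (rule ntensor_mult_vec_flip[OF _ _ s v r]) (auto simp: mat2_one)
  also have "(\<Prod>j<n. bentry (if bit s j then mat2 0 1 0 0 else 1\<^sub>m 2) (bit r j) (bit r j \<noteq> bit s j))
      = (if \<forall>j<n. bit s j \<longrightarrow> \<not> bit r j then 1 else 0)"
  proof (cases "\<forall>j<n. bit s j \<longrightarrow> \<not> bit r j")
    case False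
    then obtain j where "j < n" "bit s j" "bit r j" by blast
    thus ?thesis using False by (auto simp: mat2_one intro!: prod_zero bexI[of _ j])
  qed (auto simp: mat2_one intro!: prod.neutral)
  finally show ?thesis .
qed

lemma lower_op_eq: "lower_op n s = pauli_op n (\<lambda>j. if bit s j then 1 else 0) * proj_ones n {j. j < n \<and> bit s j}"
  unfolding lower_op_def pauli_op_def proj_ones_def
  by (subst ntensor_mult) (auto simp: qubit_proj_def pauli1_mat2 mat2_one intro!: ntensor_cong)

lemma AD_kraus_const_weight:
  assumes v: "v \<in> carrier_vec (2^n)" and s: "s < 2^n"
    and w: "\<And>x. x < 2^n \<Longrightarrow> v $ x \<noteq> 0 \<Longrightarrow> hamming_weight n x = w"
  shows "AD_kraus n \<gamma> s *\<^sub>v v =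
    (complex_of_real (sqrt \<gamma>) ^ hamming_weight n s * complex_of_real (sqrt (1 - \<gamma>)) ^ (w - hamming_weight n s))
      \<cdot>\<^sub>v (lower_op n s *\<^sub>v v)"
    (is "_ = ?c \<cdot>\<^sub>v _")
proof (rule eq_vecI)
  fix r assume "r < dim_vec (?c \<cdot>\<^sub>v (lower_op n s *\<^sub>v v))"
  hence r: "r < 2^n" by simp
  show "(AD_kraus n \<gamma> s *\<^sub>v v) $ r = (?c \<cdot>\<^sub>v (lower_op n s *\<^sub>v v)) $ r"
  proof (cases "\<forall>j<n. bit s j \<longrightarrow> \<not> bit r j")
    case True
    show ?thesis
    proof (cases "v $ (xor r s) = 0")
      case False
      hence "hamming_weight n r = w - hamming_weight n s"
        using w[OF xor_less_pow2[OF r s]] hamming_weight_xor_disjoint[of n s r] True by simp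
      thus ?thesis using True r
        by (simp add: AD_kraus_mult_vec[OF v s r] lower_op_mult_vec[OF v s r] kraus_amp_disjoint
            del: index_mult_mat_vec)
    qed (use r in \<open>simp add: AD_kraus_mult_vec[OF v s r] lower_op_mult_vec[OF v s r] del: index_mult_mat_vec\<close>)
  next
    case False
    then obtain j where "j < n" "bit s j" "bit r j" by blast
    thus ?thesis using r
      by (auto simp: AD_kraus_mult_vec[OF v s r] lower_op_mult_vec[OF v s r] kraus_amp_overlap
          simp del: index_mult_mat_vec)
  qed
qed simp

text \<open>On a state of constant Hamming weight every Kraus branch is, up to a scalar, the lowering
  operator applied to the state: a projection onto ones (which keeps stabilizer states up to a
  scalar) followed by a Pauli X string.\<close>

lemma AD_channel_const_weight_in_stab_polytope:
  assumes st: "stabilizer_state n \<psi>" and \<gamma>: "0 \<le> \<gamma>" "\<gamma> \<le> 1"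
    and const: "\<forall>x\<in>support n \<psi>. \<forall>y\<in>support n \<psi>. hamming_weight n x = hamming_weight n y"
  shows "AD_channel n \<gamma> (proj \<psi>) \<in> stab_polytope n"
proof (rule AD_channel_in_stab_polytope[OF \<gamma> st])
  fix s :: nat assume s: "s < 2^n"
  have v: "\<psi> \<in> carrier_vec (2^n)" using st by (rule stabilizer_state_carrier)
  obtain x0 where x0: "x0 < 2^n" "\<psi> $ x0 \<noteq> 0" using stabilizer_state_nonzero[OF st] .
  have w: "hamming_weight n x = hamming_weight n x0" if "x < 2^n" "\<psi> $ x \<noteq> 0" for x
    using const x0 that unfolding support_def by blast
  let ?X = "pauli_op n (\<lambda>j. if bit s j then 1 else 0)"
  have S: "{j. j < n \<and> bit s j} \<subseteq> {..<n}" by auto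
  obtain a \<phi>' where \<phi>': "stabilizer_state n \<phi>'" "proj_ones n {j. j < n \<and> bit s j} *\<^sub>v \<psi> = a \<cdot>\<^sub>v \<phi>'"
    by (rule stabilizer_state_proj_ones[OF st S])
  have "lower_op n s *\<^sub>v \<psi> = ?X *\<^sub>v (a \<cdot>\<^sub>v \<phi>')"
    unfolding lower_op_eq \<phi>'(2)[symmetric] using v by (simp add: square_mat_simps[where N="2^n"])
  also have "\<dots> = a \<cdot>\<^sub>v (?X *\<^sub>v \<phi>')"
    using stabilizer_state_carrier[OF \<phi>'(1)] by (simp add: mult_mat_vec[of _ "2^n" "2^n"])
  finally have "AD_kraus n \<gamma> s *\<^sub>v \<psi> = (complex_of_real (sqrt \<gamma>) ^ hamming_weight n s *
      complex_of_real (sqrt (1 - \<gamma>)) ^ (hamming_weight n x0 - hamming_weight n s) * a) \<cdot>\<^sub>v (?X *\<^sub>v \<phi>')"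
    by (simp add: AD_kraus_const_weight[OF v s w] smult_smult_assoc)
  moreover have "stabilizer_state n (?X *\<^sub>v \<phi>')"
    by (rule stabilizer_state_clifford[OF clifford_pauli_op \<phi>'(1)]) simp
  ultimately show "\<exists>a \<phi>. stabilizer_state n \<phi> \<and> AD_kraus n \<gamma> s *\<^sub>v \<psi> = a \<cdot>\<^sub>v \<phi>" by blast
qed

section \<open>Off-diagonal entries and magic generation\<close>

lemma stabilizer_state_amplitude_mult_le:
  assumes "stabilizer_state n \<phi>" "x < 2^n" "y < 2^n"
  shows "cmod (\<phi> $ x) * cmod (\<phi> $ y) \<le> (cmod (\<phi> $ x))^2"
proof (cases "\<phi> $ x = 0 \<or> \<phi> $ y = 0")
  case False
  thus ?thesis using stabilizer_state_uniform_amplitudes[OF assms] by (simp add: power2_eq_square)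
qed auto

text \<open>By uniformity of amplitudes every pure stabilizer state satisfies |rho_xy| \<le> rho_xx, and
  this inequality passes to convex combinations.\<close>

lemma stab_polytope_entry_le:
  assumes rho: "\<rho> \<in> stab_polytope n" and x: "x < 2^n" and y: "y < 2^n"
  shows "cmod (\<rho> $$ (x,y)) \<le> Re (\<rho> $$ (x,x))"
proof -
  from rho obtain m :: nat and p \<psi> where p: "\<forall>i<m. p i \<ge> 0 \<and> stabilizer_state n (\<psi> i)"
    and \<rho>: "\<rho> = mat (2^n) (2^n) (\<lambda>(r,c). \<Sum>i<m. complex_of_real (p i) * proj (\<psi> i) $$ (r,c))"
    unfolding stab_polytope_def mem_Collect_eq by blast
  have dim: "dim_vec (\<psi> i) = 2^n" if "i < m" for i
    using p that stabilizer_state_carrier carrier_vecD by blast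
  have entry: "\<rho> $$ (r,c) = (\<Sum>i<m. complex_of_real (p i) * (\<psi> i $ r * cnj (\<psi> i $ c)))"
    if "r < 2^n" "c < 2^n" for r c
    unfolding \<rho> using that dim by (auto simp: proj_index intro!: sum.cong)
  have "cmod (\<rho> $$ (x,y)) \<le> (\<Sum>i<m. cmod (complex_of_real (p i) * (\<psi> i $ x * cnj (\<psi> i $ y))))"
    unfolding entry[OF x y] by (rule norm_sum)
  also have "\<dots> = (\<Sum>i<m. p i * (cmod (\<psi> i $ x) * cmod (\<psi> i $ y)))"
    using p by (intro sum.cong refl) (simp add: norm_mult)
  also have "\<dots> \<le> (\<Sum>i<m. p i * (cmod (\<psi> i $ x))^2)"
    using p stabilizer_state_amplitude_mult_le[OF _ x y] by (intro sum_mono mult_left_mono) auto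
  also have "\<dots> = Re (\<Sum>i<m. complex_of_real (p i * (cmod (\<psi> i $ x))^2))"
    by (simp add: Re_sum)
  also have "\<dots> = Re (\<rho> $$ (x,x))"
    unfolding entry[OF x x] by (simp only: of_real_mult complex_norm_square)
  finally show ?thesis .
qed

lemma AD_kraus_zero_mult_vec:
  assumes "v \<in> carrier_vec (2^n)" "r < 2^n"
  shows "(AD_kraus n \<gamma> 0 *\<^sub>v v) $ r = complex_of_real (sqrt (1 - \<gamma>)) ^ hamming_weight n r * v $ r"
  using AD_kraus_mult_vec[OF assms(1) _ assms(2), of 0] kraus_amp_disjoint[of n 0 r \<gamma>]
  by (simp add: hamming_weight_def)

lemma AD_kraus_max_weight_entry:
  assumes v: "v \<in> carrier_vec (2^n)" and x: "x < 2^n" and s: "s < 2^n" "s \<noteq> 0"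
    and max: "\<And>z. z < 2^n \<Longrightarrow> v $ z \<noteq> 0 \<Longrightarrow> hamming_weight n z \<le> hamming_weight n x"
  shows "(AD_kraus n \<gamma> s *\<^sub>v v) $ x = 0"
proof (cases "\<forall>j<n. bit s j \<longrightarrow> \<not> bit x j")
  case True
  hence "hamming_weight n x < hamming_weight n (xor x s)"
    using hamming_weight_xor_disjoint[of n s x] hamming_weight_pos[OF s] by simp
  hence "v $ (xor x s) = 0" using max[OF xor_less_pow2[OF x s(1)]] by fastforce
  thus ?thesis by (simp add: AD_kraus_mult_vec[OF v s(1) x] del: index_mult_mat_vec)
next
  case False
  then obtain j where "j < n" "bit s j" "bit x j" by blast
  thus ?thesis by (simp add: AD_kraus_mult_vec[OF v s(1) x] kraus_amp_overlap del: index_mult_mat_vec)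
qed

text \<open>In a row x of maximal weight only the no-jump branch contributes, so damping scales rho_xy
  by (1 - \<gamma>)^((|x| + |y|)/2): a lighter y makes |rho_xy| exceed rho_xx.\<close>

lemma AD_channel_max_weight_entry:
  assumes v: "v \<in> carrier_vec (2^n)" and x: "x < 2^n" and c: "c < 2^n"
    and max: "\<And>z. z < 2^n \<Longrightarrow> v $ z \<noteq> 0 \<Longrightarrow> hamming_weight n z \<le> hamming_weight n x"
  shows "AD_channel n \<gamma> (proj v) $$ (x,c) =
    complex_of_real (sqrt (1 - \<gamma>)) ^ hamming_weight n x * v $ x *
    cnj (complex_of_real (sqrt (1 - \<gamma>)) ^ hamming_weight n c * v $ c)"
proof -
  let ?K = "\<lambda>s. AD_kraus n \<gamma> s *\<^sub>v v"
  have "AD_channel n \<gamma> (proj v) $$ (x,c) = (\<Sum>s<(2::nat)^n. if s = 0 then ?K 0 $ x * cnj (?K 0 $ c) else 0)"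
    unfolding AD_channel_proj_index[OF v x c]
    by (intro sum.cong refl) (auto simp: AD_kraus_max_weight_entry[OF v x _ _ max] simp del: index_mult_mat_vec)
  hence "AD_channel n \<gamma> (proj v) $$ (x,c) = ?K 0 $ x * cnj (?K 0 $ c)" by simp
  thus ?thesis by (simp add: AD_kraus_zero_mult_vec[OF v x] AD_kraus_zero_mult_vec[OF v c])
qed

lemma AD_channel_nonconst_weight_notin_stab_polytope:
  assumes st: "stabilizer_state n \<psi>" and \<gamma>: "0 < \<gamma>" "\<gamma> < 1"
    and nonconst: "\<not> (\<forall>x\<in>support n \<psi>. \<forall>y\<in>support n \<psi>. hamming_weight n x = hamming_weight n y)"
  shows "AD_channel n \<gamma> (proj \<psi>) \<notin> stab_polytope n"
proof
  assume inP: "AD_channel n \<gamma> (proj \<psi>) \<in> stab_polytope n"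
  have v: "\<psi> \<in> carrier_vec (2^n)" using st by (rule stabilizer_state_carrier)
  let ?A = "support n \<psi>" and ?w = "hamming_weight n"
  have finA: "finite ?A" by (auto simp: support_def)
  have "?A \<noteq> {}" using nonconst by blast
  then obtain x where x: "x \<in> ?A" "?w x = Max (?w ` ?A)" using finA by (metis (no_types, lifting) Max_in finite_imageI image_iff image_is_empty)
  have max: "?w z \<le> ?w x" if "z < 2^n" "\<psi> $ z \<noteq> 0" for z
    using that finA x(2) by (simp add: support_def)
  obtain y where y: "y \<in> ?A" "?w y < ?w x"
    using nonconst max by (force simp: support_def order.order_iff_strict)
  have x': "x < 2^n" "\<psi> $ x \<noteq> 0" and y': "y < 2^n" "\<psi> $ y \<noteq> 0" using x(1) y(1) by (auto simp: support_def)
  let ?t = "sqrt (1 - \<gamma>)" and ?c = "cmod (\<psi> $ x)"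
  have t: "0 < ?t" "?t < 1" using \<gamma> by auto
  have c: "cmod (\<psi> $ y) = ?c" "0 < ?c" using stabilizer_state_uniform_amplitudes[OF st y'(1) x'(1) y'(2) x'(2)] x'(2) by auto
  have entry: "AD_channel n \<gamma> (proj \<psi>) $$ (x,z) =
      complex_of_real ?t ^ ?w x * \<psi> $ x * cnj (complex_of_real ?t ^ ?w z * \<psi> $ z)" if "z < 2^n" for z
    by (rule AD_channel_max_weight_entry[OF v x'(1) that max])
  have "Re (AD_channel n \<gamma> (proj \<psi>) $$ (x,x)) = (cmod (complex_of_real ?t ^ ?w x * \<psi> $ x))^2"
    unfolding entry[OF x'(1)] complex_norm_square[symmetric] by simp
  also have "\<dots> = ?t ^ (?w x + ?w x) * ?c^2"
    using t by (simp add: norm_mult norm_power power_add power_mult_distrib power2_eq_square)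
  also have "\<dots> < ?t ^ (?w x + ?w y) * ?c^2"
    using y(2) t c(2) by (intro mult_strict_right_mono power_strict_decreasing) auto
  also have "\<dots> = cmod (AD_channel n \<gamma> (proj \<psi>) $$ (x,y))"
    unfolding entry[OF y'(1)] using t c by (simp add: norm_mult norm_power power_add power2_eq_square)
  finally show False using stab_polytope_entry_le[OF inP x'(1) y'(1)] by simp
qed

theorem propositionS6:
  fixes n :: nat and \<phi> :: "complex vec"
  assumes "stabilizer_state n \<phi>"
  defines "A \<equiv> support n \<phi>"
  shows "(magic_insulator n \<phi> \<longleftrightarrow>
            (\<forall>x\<in>A. \<forall>y\<in>A. hamming_weight n x = hamming_weight n y))
       \<and> (\<not> (\<forall>x\<in>A. \<forall>y\<in>A. hamming_weight n x = hamming_weight n y) \<longrightarrow> magic_generator n \<phi>)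
       \<and> ({\<gamma>::real. 0 \<le> \<gamma> \<and> \<gamma> \<le> 1 \<and> AD_channel n \<gamma> (proj \<phi>) \<in> stab_polytope n} = {0..1}
          \<or> {\<gamma>::real. 0 \<le> \<gamma> \<and> \<gamma> \<le> 1 \<and> AD_channel n \<gamma> (proj \<phi>) \<in> stab_polytope n} = {0,1})"
proof -
  let ?const = "\<forall>x\<in>A. \<forall>y\<in>A. hamming_weight n x = hamming_weight n y"
  let ?inside = "\<lambda>\<gamma>. AD_channel n \<gamma> (proj \<phi>) \<in> stab_polytope n"
  let ?S = "{\<gamma>::real. 0 \<le> \<gamma> \<and> \<gamma> \<le> 1 \<and> ?inside \<gamma>}"
  have insulating: "?inside \<gamma>" if ?const "0 \<le> \<gamma>" "\<gamma> \<le> 1" for \<gamma>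
    by (rule AD_channel_const_weight_in_stab_polytope[OF assms(1) that(2,3) that(1)[unfolded A_def]])
  have generating: "\<not> ?inside \<gamma>" if "\<not> ?const" "0 < \<gamma>" "\<gamma> < 1" for \<gamma>
    by (rule AD_channel_nonconst_weight_notin_stab_polytope[OF assms(1) that(2,3) that(1)[unfolded A_def]])
  have "magic_insulator n \<phi> \<longleftrightarrow> ?const"
  proof
    assume "magic_insulator n \<phi>"
    hence "?inside (1/2)" unfolding magic_insulator_def by (rule allE[of _ "1/2"]) simp
    thus ?const using generating[of "1/2"] by (rule contrapos_pp) simp_all
  next
    assume ?const
    thus "magic_insulator n \<phi>" unfolding magic_insulator_def using insulating by blast
  qed
  moreover have "\<not> ?const \<longrightarrow> magic_generator n \<phi>"
    using generating unfolding magic_generator_def by blast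
  moreover have "?S = {0..1}" if ?const
    using insulating[OF that] by auto
  moreover have "?S = {0,1}" if "\<not> ?const"
  proof (rule Set.set_eqI, rule iffI)
    fix \<gamma> assume "\<gamma> \<in> ?S"
    thus "\<gamma> \<in> {0,1}" using generating[OF that, of \<gamma>] by fastforce
  qed (use AD_channel_endpoints_in_stab_polytope[OF assms(1)] in auto)
  ultimately show ?thesis by blast
qed

end
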